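(* (Sparse F5 criterion.) Let $I^h\subset\mathbb{K}[S_M^h]$ be a homogeneous ideal, $G^h$ a sparse Gröbner basis of $I^h$ with respect to $\prec_h$ consisting of homogeneous polynomials, $D\in\mathbb{N}$, and let $\mathcal{M}'_D$ be the matrix defined below. Let $d\in\mathbb{N}$ and $\mathfrak{b}=\{X^{(s,D-d)}\in\mathbb{K}[S_M^h]_{D-d}:\text{there is no }g\in G^h\text{ with }\mathrm{LM}_{\prec_h}(g)\mid_\delta X^{(s,D-d)}\}$. Let $f\in\mathbb{K}[S_M^h]_d$ and let $\mathcal{M}^*_D$ be the Macaulay matrix obtained by appending to $\mathcal{M}'_D$ the rows indexed by $\{X^{(s,D-d)}\cdot f: X^{(s,D-d)}\in\mathfrak{b}\}$. Let $\widetilde{\mathcal{M}^*_D}$ be its reduced row echelon form, and let $\widetilde{\mathcal{M}_D}$ be the reduced row echelon form of the Macaulay matrix $\mathcal{M}_D$ with columns all monomials of $\mathbb{K}[S_M^h]_D$ in decreasing $\prec_h$-order and rows all products $X^{(u,D-\deg h)}\cdot h$ with $h\in G^h\cup\{f\}$ and $X^{(u,D-\deg h)}$ a monomial of $\mathbb{K}[S_M^h]_{D-\deg h}$. Then $\mathrm{Rows}(\widetilde{\mathcal{M}^*_D})=\mathrm{Rows}(\widetilde{\mathcal{M}_D})$. Moreover, if $f$ is not a zero-divisor in $\mathbb{K}[S_M^h]/I^h$, then $\mathcal{M}^*_D$ is full-rank.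
   Context: Let $\mathbb{K}$ be a field of characteristic $0$, $M\subset\mathbb{R}^n$ a polytope with $0\in M$, $S_M\subset\mathbb{Z}^n$ the affine semigroup generated by $M\cap\mathbb{Z}^n$ and $S_M^h\subset\mathbb{Z}^{n+1}$ the one generated by $\{(s,1):s\in M\cap\mathbb{Z}^n\}$, both assumed pointed. $\mathbb{K}[S]$ is the semigroup algebra with monomials $X^s$, $X^sX^t=X^{s+t}$; $\mathbb{K}[S_M^h]$ is graded by $\deg X^{(s,d)}=d$, $\mathbb{K}[S_M^h]_d$ is the degree-$d$ part. $\chi:\mathbb{K}[S_M^h]\to\mathbb{K}[S_M]$, $X^{(s,d)}\mapsto X^s$. The affine degree $\delta^A(X^s)$ is the least $d$ with $(s,d)\in S_M^h$, extended to polynomials by the maximum over the support; the sparse degree of $f\in\mathbb{K}[S_M^h]$ is $\delta(f)=\delta^A(\chi(f))$. Fix a monomial order $<_M$ on $\mathbb{K}[S_M]$; the sparse order is $X^s\prec X^r$ iff $\delta^A(X^s)<\delta^A(X^r)$, or equality and $X^s<_MX^r$; the graded sparse order is $X^{(s,d)}\prec_hX^{(r,d')}$ iff $d<d'$, or $d=d'$ and $X^s\prec X^r$. Divisibility: $X^{(s,d_s)}\mid_\delta X^{(r,d_r)}$ if some monomial $X^{(t,d_t)}$ satisfies $X^{(s,d_s)}X^{(t,d_t)}=X^{(r,d_r)}$ and $\delta(X^{(s,d_s)})+\delta(X^{(t,d_t)})=\delta(X^{(r,d_r)})$. A sparse Gröbner basis of $I^h$ w.r.t. $\prec_h$ is a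 subset of $I^h$ generating $I^h$ such that every nonzero $f\in I^h$ has some element $g$ of it with $\mathrm{LM}_{\prec_h}(g)\mid_\delta\mathrm{LM}_{\prec_h}(f)$. A Macaulay matrix has columns indexed by monomials and rows indexed by polynomials, entry = coefficient; $\mathrm{Rows}(\mathcal{M})$ is the set of nonzero polynomials represented by its rows. The matrix $\mathcal{M}'_D$: let $\mathcal{N}$ be the set of monomials of $\mathbb{K}[S_M^h]_D$ divisible (in the sense $\mid_\delta$) by $\mathrm{LM}_{\prec_h}(g)$ for some $g\in G^h$; associate to each $X^{(s,D)}\in\mathcal{N}$ exactly one such $g$, and let $\mathcal{R}$ be the set of products $X^t g$ where $X^t\,\mathrm{LM}_{\prec_h}(g)=X^{(s,D)}$ with $\delta(X^t)+\delta(\mathrm{LM}_{\prec_h}(g))=\delta(X^{(s,D)})$; $\mathcal{M}'_D$ has columns all monomials of $\mathbb{K}[S_M^h]_D$ in decreasing $\prec_h$-order and rows indexed by $\mathcal{R}$. *)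

theory Defs
  imports "HOL-Library.Poly_Mapping" "HOL-Library.Product_Plus"
          "Jordan_Normal_Form.DL_Rank" "Jordan_Normal_Form.Gauss_Jordan_Elimination"
begin

text \<open>Z^n is encoded as finitely supported maps nat =>0 int whose support lies in {..<n};
  R^n as maps nat => real vanishing outside {..<n}.  Exponents of K[S_M^h] live in
  Z^n x Z (the last coordinate is the homogenising degree).\<close>

type_synonym zvec = "nat \<Rightarrow>\<^sub>0 int"
type_synonym hmon = "zvec \<times> int"

definition in_Rn :: "nat \<Rightarrow> (nat \<Rightarrow> real) \<Rightarrow> bool" where
  "in_Rn n x \<longleftrightarrow> (\<forall>i\<ge>n. x i = 0)"

definition polytope :: "nat \<Rightarrow> (nat \<Rightarrow> real) set \<Rightarrow> bool" where
  "polytope n M \<longleftrightarrow> (\<exists>V. finite V \<and> V \<noteq> {} \<and> (\<forall>v\<in>V. in_Rn n v) \<and>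
     M = {x. \<exists>u. (\<forall>v\<in>V. 0 \<le> u v) \<and> sum u V = 1 \<and> x = (\<lambda>i. \<Sum>v\<in>V. u v * v i)})"

definition lattice_pts :: "nat \<Rightarrow> (nat \<Rightarrow> real) set \<Rightarrow> zvec set" where
  "lattice_pts n M = {s. Poly_Mapping.keys s \<subseteq> {..<n} \<and> (\<lambda>i. real_of_int (Poly_Mapping.lookup s i)) \<in> M}"

inductive_set SM :: "nat \<Rightarrow> (nat \<Rightarrow> real) set \<Rightarrow> zvec set" for n M where
  SM_zero: "0 \<in> SM n M"
| SM_add: "s \<in> lattice_pts n M \<Longrightarrow> t \<in> SM n M \<Longrightarrow> s + t \<in> SM n M"

inductive_set SMh :: "nat \<Rightarrow> (nat \<Rightarrow> real) set \<Rightarrow> hmon set" for n M where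
  SMh_zero: "0 \<in> SMh n M"
| SMh_add: "s \<in> lattice_pts n M \<Longrightarrow> t \<in> SMh n M \<Longrightarrow> (s, 1) + t \<in> SMh n M"

definition pointed :: "'a::ab_group_add set \<Rightarrow> bool" where
  "pointed S \<longleftrightarrow> (\<forall>x\<in>S. - x \<in> S \<longrightarrow> x = 0)"

definition aff_deg :: "nat \<Rightarrow> (nat \<Rightarrow> real) set \<Rightarrow> zvec \<Rightarrow> nat" where
  "aff_deg n M s = (LEAST d. (s, int d) \<in> SMh n M)"

definition sdeg :: "nat \<Rightarrow> (nat \<Rightarrow> real) set \<Rightarrow> hmon \<Rightarrow> nat" where
  "sdeg n M m = aff_deg n M (fst m)"

definition monomial_order :: "nat \<Rightarrow> (nat \<Rightarrow> real) set \<Rightarrow> (zvec \<Rightarrow> zvec \<Rightarrow> bool) \<Rightarrow> bool" where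
  "monomial_order n M lt \<longleftrightarrow>
     (\<forall>s\<in>SM n M. \<not> lt s s) \<and>
     (\<forall>s\<in>SM n M. \<forall>t\<in>SM n M. \<forall>u\<in>SM n M. lt s t \<longrightarrow> lt t u \<longrightarrow> lt s u) \<and>
     (\<forall>s\<in>SM n M. \<forall>t\<in>SM n M. s \<noteq> t \<longrightarrow> lt s t \<or> lt t s) \<and>
     (\<forall>s\<in>SM n M. \<forall>t\<in>SM n M. \<forall>r\<in>SM n M. lt s t \<longrightarrow> lt (s + r) (t + r)) \<and>
     \<not> (\<exists>f. \<forall>i. f i \<in> SM n M \<and> lt (f (Suc i)) (f i))"

definition sparse_less :: "nat \<Rightarrow> (nat \<Rightarrow> real) set \<Rightarrow> (zvec \<Rightarrow> zvec \<Rightarrow> bool) \<Rightarrow> zvec \<Rightarrow> zvec \<Rightarrow> bool" where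
  "sparse_less n M lt s r \<longleftrightarrow>
     aff_deg n M s < aff_deg n M r \<or> (aff_deg n M s = aff_deg n M r \<and> lt s r)"

definition hless :: "nat \<Rightarrow> (nat \<Rightarrow> real) set \<Rightarrow> (zvec \<Rightarrow> zvec \<Rightarrow> bool) \<Rightarrow> hmon \<Rightarrow> hmon \<Rightarrow> bool" where
  "hless n M lt a b \<longleftrightarrow>
     snd a < snd b \<or> (snd a = snd b \<and> sparse_less n M lt (fst a) (fst b))"

definition LM :: "nat \<Rightarrow> (nat \<Rightarrow> real) set \<Rightarrow> (zvec \<Rightarrow> zvec \<Rightarrow> bool) \<Rightarrow> (hmon \<Rightarrow>\<^sub>0 'k::zero) \<Rightarrow> hmon" where
  "LM n M lt g = (THE m. m \<in> Poly_Mapping.keys g \<and> (\<forall>m'\<in>Poly_Mapping.keys g. m' \<noteq> m \<longrightarrow> hless n M lt m' m))"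

definition ddvd :: "nat \<Rightarrow> (nat \<Rightarrow> real) set \<Rightarrow> hmon \<Rightarrow> hmon \<Rightarrow> bool" where
  "ddvd n M a b \<longleftrightarrow> (\<exists>t\<in>SMh n M. a + t = b \<and> sdeg n M a + sdeg n M t = sdeg n M b)"

definition hring :: "nat \<Rightarrow> (nat \<Rightarrow> real) set \<Rightarrow> (hmon \<Rightarrow>\<^sub>0 'k::zero) set" where
  "hring n M = {p. Poly_Mapping.keys p \<subseteq> SMh n M}"

definition xmon :: "hmon \<Rightarrow> (hmon \<Rightarrow>\<^sub>0 'k::{zero,one})" where
  "xmon m = Poly_Mapping.single m 1"

definition is_homog :: "nat \<Rightarrow> (hmon \<Rightarrow>\<^sub>0 'k::zero) \<Rightarrow> bool" where
  "is_homog d p \<longleftrightarrow> (\<forall>m\<in>Poly_Mapping.keys p. snd m = int d)"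

definition homogeneous :: "(hmon \<Rightarrow>\<^sub>0 'k::zero) \<Rightarrow> bool" where
  "homogeneous p \<longleftrightarrow> (\<exists>d. is_homog d p)"

definition hpart :: "nat \<Rightarrow> (nat \<Rightarrow> real) set \<Rightarrow> nat \<Rightarrow> (hmon \<Rightarrow>\<^sub>0 'k::zero) set" where
  "hpart n M d = {p \<in> hring n M. is_homog d p}"

definition hcomp :: "int \<Rightarrow> (hmon \<Rightarrow>\<^sub>0 'k::comm_monoid_add) \<Rightarrow> (hmon \<Rightarrow>\<^sub>0 'k)" where
  "hcomp d p = (\<Sum>m\<in>{m\<in>Poly_Mapping.keys p. snd m = d}. Poly_Mapping.single m (Poly_Mapping.lookup p m))"

definition is_ideal :: "nat \<Rightarrow> (nat \<Rightarrow> real) set \<Rightarrow> (hmon \<Rightarrow>\<^sub>0 'k::comm_ring_1) set \<Rightarrow> bool" where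
  "is_ideal n M I \<longleftrightarrow> I \<subseteq> hring n M \<and> 0 \<in> I \<and> (\<forall>p\<in>I. \<forall>q\<in>I. p + q \<in> I) \<and>
     (\<forall>r\<in>hring n M. \<forall>p\<in>I. r * p \<in> I)"

definition homog_ideal :: "nat \<Rightarrow> (nat \<Rightarrow> real) set \<Rightarrow> (hmon \<Rightarrow>\<^sub>0 'k::comm_ring_1) set \<Rightarrow> bool" where
  "homog_ideal n M I \<longleftrightarrow> is_ideal n M I \<and> (\<forall>p\<in>I. \<forall>d. hcomp d p \<in> I)"

definition ideal_gen :: "nat \<Rightarrow> (nat \<Rightarrow> real) set \<Rightarrow> (hmon \<Rightarrow>\<^sub>0 'k::comm_ring_1) set \<Rightarrow> (hmon \<Rightarrow>\<^sub>0 'k) set" where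
  "ideal_gen n M G = \<Inter>{J. is_ideal n M J \<and> G \<subseteq> J}"

definition sparse_GB :: "nat \<Rightarrow> (nat \<Rightarrow> real) set \<Rightarrow> (zvec \<Rightarrow> zvec \<Rightarrow> bool) \<Rightarrow>
    (hmon \<Rightarrow>\<^sub>0 'k::comm_ring_1) set \<Rightarrow> (hmon \<Rightarrow>\<^sub>0 'k) set \<Rightarrow> bool" where
  "sparse_GB n M lt I G \<longleftrightarrow> G \<subseteq> I \<and> ideal_gen n M G = I \<and>
     (\<forall>f\<in>I. f \<noteq> 0 \<longrightarrow> (\<exists>g\<in>G. g \<noteq> 0 \<and> ddvd n M (LM n M lt g) (LM n M lt f)))"

definition nonzerodivisor_mod :: "nat \<Rightarrow> (nat \<Rightarrow> real) set \<Rightarrow> (hmon \<Rightarrow>\<^sub>0 'k::comm_ring_1) set \<Rightarrow> (hmon \<Rightarrow>\<^sub>0 'k) \<Rightarrow> bool" where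
  "nonzerodivisor_mod n M I f \<longleftrightarrow> (\<forall>q\<in>hring n M. f * q \<in> I \<longrightarrow> q \<in> I)"

definition mons :: "nat \<Rightarrow> (nat \<Rightarrow> real) set \<Rightarrow> nat \<Rightarrow> hmon set" where
  "mons n M D = {m \<in> SMh n M. snd m = int D}"

definition col_list :: "nat \<Rightarrow> (nat \<Rightarrow> real) set \<Rightarrow> (zvec \<Rightarrow> zvec \<Rightarrow> bool) \<Rightarrow> nat \<Rightarrow> hmon list" where
  "col_list n M lt D = (THE xs. set xs = mons n M D \<and> sorted_wrt (\<lambda>a b. hless n M lt b a) xs)"

definition macaulay :: "hmon list \<Rightarrow> (hmon \<Rightarrow>\<^sub>0 'k::zero) list \<Rightarrow> 'k mat" where
  "macaulay cs rs = mat (length rs) (length cs) (\<lambda>(i, j). Poly_Mapping.lookup (rs ! i) (cs ! j))"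

definition enum_set :: "'a set \<Rightarrow> 'a list" where
  "enum_set R = (SOME rs. distinct rs \<and> set rs = R)"

definition Rows :: "hmon list \<Rightarrow> 'k::comm_monoid_add mat \<Rightarrow> (hmon \<Rightarrow>\<^sub>0 'k) set" where
  "Rows cs A = {p. p \<noteq> 0 \<and> (\<exists>i<dim_row A.
      p = (\<Sum>j<dim_col A. Poly_Mapping.single (cs ! j) (A $$ (i, j))))}"

definition rref :: "'k::field mat \<Rightarrow> 'k mat" where
  "rref A = gauss_jordan_single A"

definition full_rank :: "'k::field mat \<Rightarrow> bool" where
  "full_rank A \<longleftrightarrow> vec_space.rank (dim_row A) A = min (dim_row A) (dim_col A)"


definition Nset :: "nat \<Rightarrow> (nat \<Rightarrow> real) set \<Rightarrow> (zvec \<Rightarrow> zvec \<Rightarrow> bool) \<Rightarrow>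
    (hmon \<Rightarrow>\<^sub>0 'k::zero) set \<Rightarrow> nat \<Rightarrow> hmon set" where
  "Nset n M lt G D = {m\<in>mons n M D. \<exists>g\<in>G. g \<noteq> 0 \<and> ddvd n M (LM n M lt g) m}"

text \<open>R: rows of M'_D, for a choice phi of one g per element of N.\<close>
definition Rset :: "nat \<Rightarrow> (nat \<Rightarrow> real) set \<Rightarrow> (zvec \<Rightarrow> zvec \<Rightarrow> bool) \<Rightarrow>
    (hmon \<Rightarrow>\<^sub>0 'k::comm_ring_1) set \<Rightarrow> nat \<Rightarrow> (hmon \<Rightarrow> (hmon \<Rightarrow>\<^sub>0 'k)) \<Rightarrow> (hmon \<Rightarrow>\<^sub>0 'k) set" where
  "Rset n M lt G D \<phi> = {xmon t * \<phi> m | m t. m \<in> Nset n M lt G D \<and> t \<in> SMh n M \<and>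
      t + LM n M lt (\<phi> m) = m \<and> sdeg n M t + sdeg n M (LM n M lt (\<phi> m)) = sdeg n M m}"

text \<open>The set b of standard monomials of degree D - d (empty if d > D).\<close>
definition bset :: "nat \<Rightarrow> (nat \<Rightarrow> real) set \<Rightarrow> (zvec \<Rightarrow> zvec \<Rightarrow> bool) \<Rightarrow>
    (hmon \<Rightarrow>\<^sub>0 'k::zero) set \<Rightarrow> nat \<Rightarrow> nat \<Rightarrow> hmon set" where
  "bset n M lt G D d = {m\<in>SMh n M. snd m + int d = int D \<and>
      \<not> (\<exists>g\<in>G. g \<noteq> 0 \<and> ddvd n M (LM n M lt g) m)}"

definition M'_mat where
  "M'_mat n M lt G D \<phi> = macaulay (col_list n M lt D) (enum_set (Rset n M lt G D \<phi>))"

definition Mstar_mat where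
  "Mstar_mat n M lt G D \<phi> d f = macaulay (col_list n M lt D)
     (enum_set (Rset n M lt G D \<phi>) @ enum_set {xmon s * f | s. s \<in> bset n M lt G D d})"

definition MD_mat where
  "MD_mat n M lt G D f = macaulay (col_list n M lt D)
     (enum_set {xmon u * h | u h e. h \<in> G \<union> {f} \<and> is_homog e h \<and>
                   u \<in> SMh n M \<and> snd u + int e = int D})"

end

theory Submission
  imports Defs
begin

text \<open>Every
  element of \<open>I\<^sup>h\<close> of degree \<open>D\<close> lies in the span of the rows \<open>X\<^sup>t g\<close> of \<open>M'\<^sub>D\<close>: these
  have pairwise distinct leading monomials, and by the Groebner basis property every leading
  monomial of an element of \<open>I\<^sup>h\<close> occurs among them, so top reduction terminates in \<open>0\<close>.
  A row \<open>X\<^sup>u f\<close> of \<open>M\<^sub>D\<close> is \<open>q f + (X\<^sup>u - q) f\<close>, where \<open>q\<close> is the normal form of \<open>X\<^sup>u\<close>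
  modulo \<open>I\<^sup>h\<close>, supported on the standard monomials \<open>b\<close>; so \<open>q f\<close> is a combination of
  the appended rows and \<open>(X\<^sup>u - q) f \<in> I\<^sup>h\<close>. Since the nonzero rows of a reduced row echelon
  form are determined by the row span, the two reduced matrices have the same rows.

  If \<open>f\<close> is a nonzerodivisor modulo \<open>I\<^sup>h\<close>, a linear dependency among the rows of
  \<open>M\<^sup>*\<^sub>D\<close> yields \<open>q f \<in> I\<^sup>h\<close> with \<open>q\<close> supported on standard monomials, hence \<open>q \<in> I\<^sup>h\<close>
  and \<open>q = 0\<close>; what remains is a dependency among polynomials with distinct leading
  monomials, which is trivial.\<close>

definition smul :: "'k::comm_ring_1 \<Rightarrow> ('a::comm_monoid_add \<Rightarrow>\<^sub>0 'k) \<Rightarrow> ('a \<Rightarrow>\<^sub>0 'k)" where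
  "smul c p = Poly_Mapping.single 0 c * p"

lemma lookup_smul [simp]: "Poly_Mapping.lookup (smul c p) m = c * Poly_Mapping.lookup p m"
  unfolding smul_def mult_map_scale_conv_mult[symmetric] by (simp add: Poly_Mapping.map.rep_eq when_def)

lemma keys_smul_subset: "Poly_Mapping.keys (smul c p) \<subseteq> Poly_Mapping.keys p"
  by (auto simp: in_keys_iff)

lemma smul_mult: "smul c p * q = smul c (p * q)"
  unfolding smul_def by (simp add: mult.assoc)

lemma smul_single: "smul c (Poly_Mapping.single m 1) = Poly_Mapping.single m c"
  unfolding smul_def by (simp add: mult_single)

interpretation poly_module: Modules.module "smul :: 'k::comm_ring_1 \<Rightarrow> ('a::comm_monoid_add \<Rightarrow>\<^sub>0 'k) \<Rightarrow> _"
  by unfold_locales (auto intro!: poly_mapping_eqI simp: lookup_add algebra_simps)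

lemma poly_as_sum_of_terms: "p = (\<Sum>m\<in>Poly_Mapping.keys p. smul (Poly_Mapping.lookup p m) (Poly_Mapping.single m 1))"
  by (rule poly_mapping_eqI) (simp add: lookup_sum smul_single lookup_single when_def in_keys_iff)

definition lin_comb :: "(nat \<Rightarrow> 'k::comm_ring_1) \<Rightarrow> ('a::comm_monoid_add \<Rightarrow>\<^sub>0 'k) list \<Rightarrow> ('a \<Rightarrow>\<^sub>0 'k)" where
  "lin_comb c xs = (\<Sum>i<length xs. smul (c i) (xs ! i))"

lemma lin_comb_append:
  "lin_comb c (xs @ ys) = lin_comb c xs + lin_comb (\<lambda>j. c (length xs + j)) ys"
proof -
  have split: "(\<Sum>i<a + b. F i) = (\<Sum>i<a. F i) + (\<Sum>j<b. F (a + j))" for a b and F :: "nat \<Rightarrow> 'z::comm_monoid_add"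
    by (induction b) (auto simp: add.assoc)
  show ?thesis
    unfolding lin_comb_def by (simp add: split nth_append)
qed

lemma lin_comb_add: "lin_comb (\<lambda>i. c i + c' i) xs = lin_comb c xs + lin_comb c' xs"
  unfolding lin_comb_def by (simp add: poly_module.scale_left_distrib sum.distrib)

lemma lin_comb_scale: "lin_comb (\<lambda>i. a * c i) xs = smul a (lin_comb c xs)"
  unfolding lin_comb_def by (simp add: poly_module.scale_sum_right)

lemma lin_comb_unit: "k < length xs \<Longrightarrow> lin_comb (\<lambda>i. if i = k then 1 else 0) xs = xs ! k"
  unfolding lin_comb_def by (simp add: if_distrib[of "\<lambda>c. smul c _"] cong: if_cong)

lemma span_set_eq_lin_combs: "poly_module.span (set xs) = range (\<lambda>c. lin_comb c xs)"
proof
  have "poly_module.subspace (range (\<lambda>c. lin_comb c xs))"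
  proof (rule poly_module.subspaceI)
    show "0 \<in> range (\<lambda>c. lin_comb c xs)"
      using rangeI[of "\<lambda>c. lin_comb c xs" "\<lambda>_. 0"] by (simp add: lin_comb_def)
  next
    fix p q assume "p \<in> range (\<lambda>c. lin_comb c xs)" "q \<in> range (\<lambda>c. lin_comb c xs)"
    then obtain c c' where "p = lin_comb c xs" "q = lin_comb c' xs" by blast
    then have "p + q = lin_comb (\<lambda>i. c i + c' i) xs" by (simp add: lin_comb_add)
    show "p + q \<in> range (\<lambda>c. lin_comb c xs)" unfolding \<open>p + q = _\<close> by (rule rangeI)
  next
    fix a p assume "p \<in> range (\<lambda>c. lin_comb c xs)"
    then obtain c where "p = lin_comb c xs" by blast
    then have "smul a p = lin_comb (\<lambda>i. a * c i) xs" by (simp add: lin_comb_scale)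
    show "smul a p \<in> range (\<lambda>c. lin_comb c xs)" unfolding \<open>smul a p = _\<close> by (rule rangeI)
  qed
  moreover have "set xs \<subseteq> range (\<lambda>c. lin_comb c xs)"
  proof
    fix x assume "x \<in> set xs"
    then obtain k where "k < length xs" "x = xs ! k" by (auto simp: in_set_conv_nth)
    then have x: "x = lin_comb (\<lambda>i. if i = k then 1 else 0) xs" using lin_comb_unit[of k xs] by simp
    show "x \<in> range (\<lambda>c. lin_comb c xs)" unfolding x by (rule rangeI)
  qed
  ultimately show "poly_module.span (set xs) \<subseteq> range (\<lambda>c. lin_comb c xs)"
    by (rule poly_module.span_minimal[rotated])
  show "range (\<lambda>c. lin_comb c xs) \<subseteq> poly_module.span (set xs)"
    unfolding lin_comb_def
    by (auto intro!: poly_module.span_sum poly_module.span_scale intro: poly_module.span_base)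
qed

lemma lookup_single_mult:
  fixes p :: "'a::ab_group_add \<Rightarrow>\<^sub>0 'k::comm_semiring_1"
  shows "Poly_Mapping.lookup (Poly_Mapping.single t c * p) m = c * Poly_Mapping.lookup p (m - t)"
proof transfer
  fix t :: 'a and c :: 'k and p m
  have "(\<Sum>a. (c when t = a) * (\<Sum>q. p q when m = a + q)) = (\<Sum>a. (c * (\<Sum>q. p q when m = a + q)) when t = a)"
    by (rule Sum_any.cong) (simp add: when_def)
  also have "\<dots> = c * (\<Sum>q. p q when m = t + q)" by (rule Sum_any_when_equal')
  also have "(\<Sum>q. p q when m = t + q) = (\<Sum>q. p q when q = m - t)"
    by (rule Sum_any.cong) (auto simp: when_def algebra_simps)
  also have "\<dots> = p (m - t)" by (rule Sum_any_when_equal)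
  finally show "prod_fun (\<lambda>k. c when t = k) p m = c * p (m - t)" by (simp add: prod_fun_def)
qed

lemma lookup_xmon_mult:
  fixes p :: "hmon \<Rightarrow>\<^sub>0 'k::comm_semiring_1"
  shows "Poly_Mapping.lookup (xmon t * p) m = Poly_Mapping.lookup p (m - t)"
  unfolding xmon_def by (simp add: lookup_single_mult)

lemma keys_xmon_mult:
  fixes p :: "hmon \<Rightarrow>\<^sub>0 'k::comm_semiring_1"
  shows "Poly_Mapping.keys (xmon t * p) = (+) t ` Poly_Mapping.keys p"
proof -
  have "m \<in> (+) t ` Poly_Mapping.keys p \<longleftrightarrow> m - t \<in> Poly_Mapping.keys p" for m
    by (force simp: image_iff algebra_simps)
  then show ?thesis by (auto simp: in_keys_iff lookup_xmon_mult)
qed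

section \<open>The graded sparse order and leading monomials\<close>

lemma SMh_add_closed: "a \<in> SMh n M \<Longrightarrow> b \<in> SMh n M \<Longrightarrow> a + b \<in> SMh n M"
  by (induction a rule: SMh.induct) (auto simp: add.assoc intro: SMh.intros)

lemma SMh_snd_nonneg: "a \<in> SMh n M \<Longrightarrow> snd a \<ge> 0"
  by (induction a rule: SMh.induct) auto

lemma fst_SMh_in_SM: "a \<in> SMh n M \<Longrightarrow> fst a \<in> SM n M"
  by (induction a rule: SMh.induct) (auto intro: SM.intros)

lemma SM_homogenizable: "s \<in> SM n M \<Longrightarrow> \<exists>k. (s, k) \<in> SMh n M"
proof (induction s rule: SM.induct)
  case SM_zero
  show ?case using SMh.SMh_zero by (auto simp: zero_prod_def)
next
  case (SM_add s t)
  then obtain k where "(t, k) \<in> SMh n M" by blast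
  from SMh.SMh_add[OF SM_add(1) this] show ?case by auto
qed

lemma aff_deg_in_SMh: "s \<in> SM n M \<Longrightarrow> (s, int (aff_deg n M s)) \<in> SMh n M"
proof -
  assume "s \<in> SM n M"
  then obtain k where k: "(s, k) \<in> SMh n M" using SM_homogenizable by blast
  then have "(s, int (nat k)) \<in> SMh n M" using SMh_snd_nonneg by fastforce
  then show ?thesis unfolding aff_deg_def by (rule LeastI)
qed

lemma aff_deg_le: "(s, int k) \<in> SMh n M \<Longrightarrow> aff_deg n M s \<le> k"
  unfolding aff_deg_def by (rule Least_le)

lemma aff_deg_add_le:
  assumes "s \<in> SM n M" "t \<in> SM n M"
  shows "aff_deg n M (s + t) \<le> aff_deg n M s + aff_deg n M t"
proof -
  have "(s, int (aff_deg n M s)) + (t, int (aff_deg n M t)) \<in> SMh n M"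
    using SMh_add_closed aff_deg_in_SMh assms by blast
  then show ?thesis using aff_deg_le by fastforce
qed

lemma hless_irrefl:
  assumes "monomial_order n M lt" and "a \<in> SMh n M"
  shows "\<not> hless n M lt a a"
proof -
  have "\<not> lt (fst a) (fst a)" using assms fst_SMh_in_SM unfolding monomial_order_def by blast
  then show ?thesis unfolding hless_def sparse_less_def by auto
qed

lemma hless_trans:
  assumes mo: "monomial_order n M lt" and "a \<in> SMh n M" "b \<in> SMh n M" "c \<in> SMh n M"
    and ab: "hless n M lt a b" and bc: "hless n M lt b c"
  shows "hless n M lt a c"
proof -
  have "lt (fst a) (fst b) \<Longrightarrow> lt (fst b) (fst c) \<Longrightarrow> lt (fst a) (fst c)"
    using mo assms(2-4) fst_SMh_in_SM unfolding monomial_order_def by blast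
  with ab bc show ?thesis unfolding hless_def sparse_less_def by auto
qed

lemma hless_asym:
  "monomial_order n M lt \<Longrightarrow> a \<in> SMh n M \<Longrightarrow> b \<in> SMh n M \<Longrightarrow> hless n M lt a b \<Longrightarrow> \<not> hless n M lt b a"
  using hless_trans hless_irrefl by blast

lemma hless_linear:
  assumes mo: "monomial_order n M lt" and "a \<in> SMh n M" "b \<in> SMh n M" "a \<noteq> b"
  shows "hless n M lt a b \<or> hless n M lt b a"
proof (cases "snd a = snd b")
  case True
  then have "fst a \<noteq> fst b" using \<open>a \<noteq> b\<close> prod_eqI by blast
  then have "lt (fst a) (fst b) \<or> lt (fst b) (fst a)"
    using mo assms(2,3) fst_SMh_in_SM unfolding monomial_order_def by blast
  then show ?thesis using True unfolding hless_def sparse_less_def by auto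
qed (auto simp: hless_def)

text \<open>Multiplying by \<open>X\<^sup>t\<close> preserves \<open>\<prec>\<^sub>h\<close> among monomials of equal degree, provided
  the sparse degree is additive on the larger product; subadditivity covers the smaller one.\<close>

lemma hless_add_left:
  assumes mo: "monomial_order n M lt" and "a \<in> SMh n M" "b \<in> SMh n M" "t \<in> SMh n M"
    and snd: "snd a = snd b" and ba: "hless n M lt b a"
    and deg: "sdeg n M t + sdeg n M a = sdeg n M (t + a)"
  shows "hless n M lt (t + b) (t + a)"
proof -
  have f: "fst a \<in> SM n M" "fst b \<in> SM n M" "fst t \<in> SM n M" using assms fst_SMh_in_SM by auto
  have sub: "aff_deg n M (fst t + fst b) \<le> aff_deg n M (fst t) + aff_deg n M (fst b)"
    using aff_deg_add_le f by blast
  have deg': "aff_deg n M (fst t) + aff_deg n M (fst a) = aff_deg n M (fst t + fst a)"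
    using deg unfolding sdeg_def by simp
  show ?thesis
  proof (cases "aff_deg n M (fst b) < aff_deg n M (fst a)")
    case True
    then show ?thesis using sub deg' unfolding hless_def sparse_less_def by (simp add: snd)
  next
    case False
    then have "aff_deg n M (fst b) = aff_deg n M (fst a)" and "lt (fst b) (fst a)"
      using ba snd unfolding hless_def sparse_less_def by auto
    moreover have "lt (fst b + fst t) (fst a + fst t)"
      using mo f \<open>lt (fst b) (fst a)\<close> unfolding monomial_order_def by blast
    ultimately show ?thesis
      using sub deg' unfolding hless_def sparse_less_def by (auto simp: snd add.commute)
  qed
qed

lemma exists_hless_greatest:
  assumes mo: "monomial_order n M lt"
  shows "finite X \<Longrightarrow> X \<noteq> {} \<Longrightarrow> X \<subseteq> SMh n M \<Longrightarrow> \<exists>m\<in>X. \<forall>m'\<in>X. m' \<noteq> m \<longrightarrow> hless n M lt m' m"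
proof (induction X rule: finite_ne_induct)
  case (insert x F)
  then obtain m where m: "m \<in> F" "\<forall>m'\<in>F. m' \<noteq> m \<longrightarrow> hless n M lt m' m" by auto
  show ?case
  proof (cases "hless n M lt m x")
    case True
    have "hless n M lt m' x" if "m' \<in> F" for m'
    proof (cases "m' = m")
      case False
      with m that have "hless n M lt m' m" by blast
      with True show ?thesis using hless_trans[OF mo] insert.prems m(1) that by blast
    qed (use True in simp)
    then show ?thesis by auto
  next
    case False
    moreover have "x \<noteq> m" using m(1) \<open>x \<notin> F\<close> by blast
    ultimately have "hless n M lt x m" using hless_linear[OF mo] insert.prems m(1) by blast
    then show ?thesis using m by auto
  qed
qed simp

lemma LM_eqI:
  assumes mo: "monomial_order n M lt" and "Poly_Mapping.keys p \<subseteq> SMh n M"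
    and "m \<in> Poly_Mapping.keys p" "\<forall>m'\<in>Poly_Mapping.keys p. m' \<noteq> m \<longrightarrow> hless n M lt m' m"
  shows "LM n M lt p = m"
  unfolding LM_def
proof (rule the_equality)
  fix m' assume m': "m' \<in> Poly_Mapping.keys p \<and> (\<forall>m''\<in>Poly_Mapping.keys p. m'' \<noteq> m' \<longrightarrow> hless n M lt m'' m')"
  show "m' = m"
  proof (rule ccontr)
    assume "m' \<noteq> m"
    then have "hless n M lt m' m" "hless n M lt m m'" using assms(3,4) m' by auto
    then show False using hless_asym[OF mo] assms(2,3) m' by blast
  qed
qed (use assms in blast)

lemma
  assumes mo: "monomial_order n M lt" and k: "Poly_Mapping.keys p \<subseteq> SMh n M" and "p \<noteq> 0"
  shows LM_in_keys: "LM n M lt p \<in> Poly_Mapping.keys p"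
    and hless_LM: "\<And>m. m \<in> Poly_Mapping.keys p \<Longrightarrow> m \<noteq> LM n M lt p \<Longrightarrow> hless n M lt m (LM n M lt p)"
proof -
  obtain m where m: "m \<in> Poly_Mapping.keys p" "\<forall>m'\<in>Poly_Mapping.keys p. m' \<noteq> m \<longrightarrow> hless n M lt m' m"
    using exists_hless_greatest[OF mo _ _ k] \<open>p \<noteq> 0\<close> by auto
  moreover have "LM n M lt p = m" using LM_eqI[OF mo k m] .
  ultimately show "LM n M lt p \<in> Poly_Mapping.keys p"
    "\<And>m. m \<in> Poly_Mapping.keys p \<Longrightarrow> m \<noteq> LM n M lt p \<Longrightarrow> hless n M lt m (LM n M lt p)"
    by auto
qed

lemma not_hless_LM:
  assumes mo: "monomial_order n M lt" and k: "Poly_Mapping.keys p \<subseteq> SMh n M"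
    and m: "m \<in> Poly_Mapping.keys p"
  shows "\<not> hless n M lt (LM n M lt p) m"
proof
  assume "hless n M lt (LM n M lt p) m"
  moreover have "p \<noteq> 0" using m by auto
  ultimately show False
    using m k LM_in_keys[OF mo k] hless_LM[OF mo k] hless_asym[OF mo] hless_irrefl[OF mo] by blast
qed

lemma LM_xmon_mult:
  fixes g :: "hmon \<Rightarrow>\<^sub>0 'k::comm_semiring_1"
  assumes mo: "monomial_order n M lt" and k: "Poly_Mapping.keys g \<subseteq> SMh n M" and "g \<noteq> 0"
    and hom: "\<forall>m\<in>Poly_Mapping.keys g. snd m = snd (LM n M lt g)"
    and t: "t \<in> SMh n M" and deg: "sdeg n M t + sdeg n M (LM n M lt g) = sdeg n M (t + LM n M lt g)"
  shows "LM n M lt (xmon t * g) = t + LM n M lt g"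
proof (rule LM_eqI[OF mo])
  show "Poly_Mapping.keys (xmon t * g) \<subseteq> SMh n M"
    using k t SMh_add_closed unfolding keys_xmon_mult by blast
  show "t + LM n M lt g \<in> Poly_Mapping.keys (xmon t * g)"
    using LM_in_keys[OF mo k \<open>g \<noteq> 0\<close>] by (simp add: keys_xmon_mult)
  show "\<forall>m\<in>Poly_Mapping.keys (xmon t * g). m \<noteq> t + LM n M lt g \<longrightarrow> hless n M lt m (t + LM n M lt g)"
  proof (intro ballI impI)
    fix m assume "m \<in> Poly_Mapping.keys (xmon t * g)" "m \<noteq> t + LM n M lt g"
    then obtain b where b: "b \<in> Poly_Mapping.keys g" "m = t + b" "b \<noteq> LM n M lt g"
      by (auto simp: keys_xmon_mult)
    have "hless n M lt b (LM n M lt g)" using hless_LM[OF mo k \<open>g \<noteq> 0\<close> b(1,3)] .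
    moreover have "LM n M lt g \<in> SMh n M" "b \<in> SMh n M" using LM_in_keys[OF mo k \<open>g \<noteq> 0\<close>] b(1) k by blast+
    ultimately show "hless n M lt m (t + LM n M lt g)"
      using hless_add_left[OF mo _ _ t _ _ deg] hom b by auto
  qed
qed

lemma mons_subset_SMh: "mons n M E \<subseteq> SMh n M"
  unfolding mons_def by blast

lemma keys_subset_mons_if_homog:
  "Poly_Mapping.keys p \<subseteq> SMh n M \<Longrightarrow> is_homog e p \<Longrightarrow> Poly_Mapping.keys p \<subseteq> mons n M e"
  unfolding mons_def is_homog_def by blast

lemma keys_mult_subset_mons:
  assumes "Poly_Mapping.keys p \<subseteq> mons n M a" "Poly_Mapping.keys q \<subseteq> mons n M b"
  shows "Poly_Mapping.keys (p * q) \<subseteq> mons n M (a + b)"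
proof
  fix m assume "m \<in> Poly_Mapping.keys (p * q)"
  then obtain u v where uv: "u \<in> Poly_Mapping.keys p" "v \<in> Poly_Mapping.keys q" "m = u + v"
    using keys_mult[of p q] by blast
  then have "u \<in> SMh n M" "v \<in> SMh n M" "snd u = int a" "snd v = int b"
    using assms unfolding mons_def by auto
  then show "m \<in> mons n M (a + b)" using uv(3) SMh_add_closed unfolding mons_def by simp
qed

lemma polytope_bounded:
  assumes "polytope n M"
  shows "\<exists>B. \<forall>x\<in>M. \<forall>i. \<bar>x i\<bar> \<le> B"
proof -
  obtain V where V: "finite V" "\<forall>v\<in>V. in_Rn n v"
    and MV: "M = {x. \<exists>u. (\<forall>v\<in>V. 0 \<le> u v) \<and> sum u V = 1 \<and> x = (\<lambda>i. \<Sum>v\<in>V. u v * v i)}"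
    using assms unfolding polytope_def by blast
  define B where "B = (\<Sum>v\<in>V. \<Sum>i<n. \<bar>v i\<bar>)"
  have "\<bar>x i\<bar> \<le> B" if "x \<in> M" for x i
  proof -
    obtain u where u: "\<forall>v\<in>V. 0 \<le> u v" "sum u V = 1" and x: "x = (\<lambda>i. \<Sum>v\<in>V. u v * v i)"
      using \<open>x \<in> M\<close> unfolding MV by blast
    have u1: "u v \<le> 1" if "v \<in> V" for v
      using member_le_sum[of v V u] u that V(1) by auto
    have "\<bar>u v * v i\<bar> \<le> (\<Sum>i<n. \<bar>v i\<bar>)" if "v \<in> V" for v
    proof (cases "i < n")
      case True
      have "\<bar>u v * v i\<bar> \<le> \<bar>v i\<bar>"
        using u u1[OF that] that by (simp add: abs_mult mult_left_le_one_le)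
      also have "\<dots> \<le> (\<Sum>i<n. \<bar>v i\<bar>)" using True by (intro member_le_sum) auto
      finally show ?thesis .
    next
      case False
      then have "v i = 0" using V(2) that unfolding in_Rn_def by simp
      then show ?thesis by (simp add: sum_nonneg)
    qed
    then have "(\<Sum>v\<in>V. \<bar>u v * v i\<bar>) \<le> B" unfolding B_def by (rule sum_mono)
    then show ?thesis unfolding x using sum_abs[of "\<lambda>v. u v * v i" V] by linarith
  qed
  then show ?thesis by blast
qed

lemma finite_lattice_pts:
  assumes "polytope n M"
  shows "finite (lattice_pts n M)"
proof -
  obtain B where B: "\<forall>x\<in>M. \<forall>i. \<bar>x i\<bar> \<le> B" using polytope_bounded[OF assms] by blast
  define F where "F = (\<lambda>s::zvec. restrict (Poly_Mapping.lookup s) {..<n})"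
  have "F ` lattice_pts n M \<subseteq> PiE {..<n} (\<lambda>_. {-\<lceil>B\<rceil>..\<lceil>B\<rceil>})"
  proof (rule image_subsetI)
    fix s assume "s \<in> lattice_pts n M"
    then have bnd: "real_of_int \<bar>Poly_Mapping.lookup s i\<bar> \<le> B" for i
      using B unfolding lattice_pts_def by fastforce
    have "-\<lceil>B\<rceil> \<le> Poly_Mapping.lookup s i \<and> Poly_Mapping.lookup s i \<le> \<lceil>B\<rceil>" for i
      using bnd[of i] by linarith
    then show "F s \<in> PiE {..<n} (\<lambda>_. {-\<lceil>B\<rceil>..\<lceil>B\<rceil>})"
      unfolding F_def by (auto simp: PiE_iff)
  qed
  then have "finite (F ` lattice_pts n M)" by (rule finite_subset) (intro finite_PiE; simp)
  moreover have "inj_on F (lattice_pts n M)"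
  proof (rule inj_onI)
    fix s t assume st: "s \<in> lattice_pts n M" "t \<in> lattice_pts n M" "F s = F t"
    show "s = t"
    proof (rule poly_mapping_eqI)
      fix i show "Poly_Mapping.lookup s i = Poly_Mapping.lookup t i"
      proof (cases "i < n")
        case True
        then show ?thesis using fun_cong[OF st(3), of i] unfolding F_def by simp
      next
        case False
        then have "i \<notin> Poly_Mapping.keys s" "i \<notin> Poly_Mapping.keys t"
          using st(1,2) unfolding lattice_pts_def by auto
        then show ?thesis by (simp add: in_keys_iff)
      qed
    qed
  qed
  ultimately show ?thesis using finite_imageD by blast
qed

lemma finite_mons:
  assumes "polytope n M"
  shows "finite (mons n M k)"
proof (induction k)
  case 0
  have "m = 0" if "m \<in> SMh n M" "snd m = 0" for m
    using that by (cases rule: SMh.cases) (auto dest: SMh_snd_nonneg)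
  then have "mons n M 0 \<subseteq> {0}" unfolding mons_def by auto
  then show ?case using finite_subset by blast
next
  case (Suc k)
  have "mons n M (Suc k) \<subseteq> (\<lambda>(s, t). (s, 1) + t) ` (lattice_pts n M \<times> mons n M k)"
  proof
    fix m assume "m \<in> mons n M (Suc k)"
    then have "m \<in> SMh n M" "snd m = int (Suc k)" unfolding mons_def by auto
    then obtain s t where "s \<in> lattice_pts n M" "t \<in> SMh n M" "m = (s, 1) + t" "snd t = int k"
      by (cases rule: SMh.cases) auto
    then show "m \<in> (\<lambda>(s, t). (s, 1) + t) ` (lattice_pts n M \<times> mons n M k)"
      unfolding mons_def by force
  qed
  moreover have "finite (lattice_pts n M \<times> mons n M k)" using finite_lattice_pts[OF assms] Suc by blast
  ultimately show ?case using finite_subset by blast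
qed

lemma finite_SMh_snd_le:
  assumes "polytope n M"
  shows "finite {m \<in> SMh n M. snd m \<le> int D}"
proof -
  have "{m \<in> SMh n M. snd m \<le> int D} \<subseteq> (\<Union>k\<le>D. mons n M k)"
  proof
    fix m assume m: "m \<in> {m \<in> SMh n M. snd m \<le> int D}"
    then have "snd m \<ge> 0" using SMh_snd_nonneg by blast
    then have "m \<in> mons n M (nat (snd m))" "nat (snd m) \<le> D" using m unfolding mons_def by auto
    then show "m \<in> (\<Union>k\<le>D. mons n M k)" by blast
  qed
  then show ?thesis using finite_mons[OF assms] by (meson finite_UN_I finite_atMost finite_subset)
qed

lemma distinct_set_enum_set: "finite X \<Longrightarrow> distinct (enum_set X) \<and> set (enum_set X) = X"
  unfolding enum_set_def by (rule someI_ex) (metis finite_distinct_list)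

lemma sorted_hless_exists:
  assumes mo: "monomial_order n M lt"
  shows "finite X \<Longrightarrow> X \<subseteq> SMh n M \<Longrightarrow> \<exists>xs. set xs = X \<and> sorted_wrt (\<lambda>a b. hless n M lt b a) xs"
proof (induction "card X" arbitrary: X rule: less_induct)
  case less
  show ?case
  proof (cases "X = {}")
    case False
    then obtain m where m: "m \<in> X" "\<forall>m'\<in>X. m' \<noteq> m \<longrightarrow> hless n M lt m' m"
      using exists_hless_greatest[OF mo less.prems(1) _ less.prems(2)] by blast
    have "card (X - {m}) < card X" using m(1) less.prems(1) by (meson card_Diff1_less)
    then obtain xs where "set xs = X - {m}" "sorted_wrt (\<lambda>a b. hless n M lt b a) xs"
      using less.hyps[of "X - {m}"] less.prems by blast
    then show ?thesis using m by (intro exI[of _ "m # xs"]) auto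
  qed simp
qed

lemma sorted_hless_unique:
  assumes mo: "monomial_order n M lt"
  shows "sorted_wrt (\<lambda>a b. hless n M lt b a) xs \<Longrightarrow> sorted_wrt (\<lambda>a b. hless n M lt b a) ys
    \<Longrightarrow> set xs = set ys \<Longrightarrow> set xs \<subseteq> SMh n M \<Longrightarrow> xs = ys"
proof (induction xs arbitrary: ys)
  case (Cons x xs)
  then obtain y ys' where ys: "ys = y # ys'" by (cases ys) auto
  have xy: "x = y"
  proof (rule ccontr)
    assume "x \<noteq> y"
    then have "y \<in> set xs" "x \<in> set ys'" using Cons.prems(3) ys by auto
    then have "hless n M lt y x" "hless n M lt x y" using Cons.prems(1,2) ys by auto
    moreover have "x \<in> SMh n M" "y \<in> SMh n M" using Cons.prems(3,4) ys by auto
    ultimately show False using hless_asym[OF mo] by blast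
  qed
  have "x \<in> SMh n M" "y \<in> SMh n M" using Cons.prems(3,4) ys by auto
  then have "\<not> hless n M lt x x" "\<not> hless n M lt y y" using hless_irrefl[OF mo] by auto
  then have "x \<notin> set xs" "y \<notin> set ys'" using Cons.prems(1,2) ys by auto
  then have "set xs = set ys'" using Cons.prems(3) ys xy by auto
  then show ?case using Cons.IH[of ys'] Cons.prems ys xy by auto
qed simp

lemma
  assumes mo: "monomial_order n M lt" and P: "polytope n M"
  shows set_col_list: "set (col_list n M lt D) = mons n M D"
    and distinct_col_list: "distinct (col_list n M lt D)"
proof -
  note sub = mons_subset_SMh[of n M D]
  obtain xs where xs: "set xs = mons n M D" "sorted_wrt (\<lambda>a b. hless n M lt b a) xs"
    using sorted_hless_exists[OF mo finite_mons[OF P] sub] by blast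
  have "col_list n M lt D = xs"
    unfolding col_list_def
  proof (rule the_equality)
    fix ys assume "set ys = mons n M D \<and> sorted_wrt (\<lambda>a b. hless n M lt b a) ys"
    then show "ys = xs" using sorted_hless_unique[OF mo, of ys xs] xs sub by auto
  qed (use xs in blast)
  moreover have "set xs \<subseteq> SMh n M" using xs(1) sub by simp
  with xs(2) have "distinct xs" by (induction xs) (auto dest: hless_irrefl[OF mo])
  ultimately show "set (col_list n M lt D) = mons n M D" "distinct (col_list n M lt D)"
    using xs by auto
qed

section \<open>Reduction by leading monomials\<close>

lemma top_reduction:
  fixes p r :: "hmon \<Rightarrow>\<^sub>0 'k::field"
  assumes mo: "monomial_order n M lt"
    and p: "p \<noteq> 0" "Poly_Mapping.keys p \<subseteq> SMh n M"
    and r: "r \<noteq> 0" "Poly_Mapping.keys r \<subseteq> SMh n M" "LM n M lt r = LM n M lt p"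
  defines "p' \<equiv> p - smul (Poly_Mapping.lookup p (LM n M lt p) / Poly_Mapping.lookup r (LM n M lt p)) r"
  shows "Poly_Mapping.keys p' \<subseteq> Poly_Mapping.keys p \<union> Poly_Mapping.keys r"
    and "p' \<noteq> 0 \<Longrightarrow> hless n M lt (LM n M lt p') (LM n M lt p)"
proof -
  let ?L = "LM n M lt p"
  let ?c = "Poly_Mapping.lookup p ?L / Poly_Mapping.lookup r ?L"
  have "Poly_Mapping.keys p' \<subseteq> Poly_Mapping.keys p \<union> Poly_Mapping.keys (smul ?c r)"
    unfolding p'_def by (rule keys_diff)
  then show keys: "Poly_Mapping.keys p' \<subseteq> Poly_Mapping.keys p \<union> Poly_Mapping.keys r"
    using keys_smul_subset[of ?c r] by blast
  have "Poly_Mapping.lookup r ?L \<noteq> 0" using LM_in_keys[OF mo r(2,1)] r(3) by (simp add: in_keys_iff)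
  then have "?L \<notin> Poly_Mapping.keys p'" unfolding p'_def by (simp add: in_keys_iff lookup_minus)
  moreover assume "p' \<noteq> 0"
  then have "LM n M lt p' \<in> Poly_Mapping.keys p'"
    using LM_in_keys[OF mo _ \<open>p' \<noteq> 0\<close>] keys p(2) r(2) by blast
  ultimately have "LM n M lt p' \<noteq> ?L" "LM n M lt p' \<in> Poly_Mapping.keys p \<union> Poly_Mapping.keys r"
    using keys by auto
  then show "hless n M lt (LM n M lt p') ?L"
    using hless_LM[OF mo p(2,1)] hless_LM[OF mo r(2,1)] r(3) by (metis UnE)
qed

lemma LM_induct [consumes 4, case_names zero step]:
  fixes p :: "hmon \<Rightarrow>\<^sub>0 'k::zero"
  assumes mo: "monomial_order n M lt" and X: "finite X" "X \<subseteq> SMh n M" and "Poly_Mapping.keys p \<subseteq> X"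
    and zero: "P 0"
    and step: "\<And>p. Poly_Mapping.keys p \<subseteq> X \<Longrightarrow> p \<noteq> 0 \<Longrightarrow>
       (\<And>q. Poly_Mapping.keys q \<subseteq> X \<Longrightarrow> (q \<noteq> 0 \<Longrightarrow> hless n M lt (LM n M lt q) (LM n M lt p)) \<Longrightarrow> P q) \<Longrightarrow> P p"
  shows "P p"
  using \<open>Poly_Mapping.keys p \<subseteq> X\<close>
proof (induction "card {m \<in> X. hless n M lt m (LM n M lt p)}" arbitrary: p rule: less_induct)
  case less
  show ?case
  proof (cases "p = 0")
    case False
    show ?thesis
    proof (rule step[OF less.prems False])
      fix q :: "hmon \<Rightarrow>\<^sub>0 'k"
      assume q: "Poly_Mapping.keys q \<subseteq> X" "q \<noteq> 0 \<Longrightarrow> hless n M lt (LM n M lt q) (LM n M lt p)"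
      show "P q"
      proof (cases "q = 0")
        case False
        have Lq: "LM n M lt q \<in> X" using LM_in_keys[OF mo _ False] q(1) X(2) by blast
        have Lp: "LM n M lt p \<in> SMh n M" using LM_in_keys[OF mo _ \<open>p \<noteq> 0\<close>] less.prems X(2) by blast
        have lt: "hless n M lt (LM n M lt q) (LM n M lt p)" using q(2)[OF False] .
        have "{m \<in> X. hless n M lt m (LM n M lt q)} \<subseteq> {m \<in> X. hless n M lt m (LM n M lt p)}"
          using hless_trans[OF mo _ _ Lp _ lt] Lq X(2) by blast
        moreover have "LM n M lt q \<notin> {m \<in> X. hless n M lt m (LM n M lt q)}"
          using hless_irrefl[OF mo] Lq X(2) by blast
        ultimately have "{m \<in> X. hless n M lt m (LM n M lt q)} \<subset> {m \<in> X. hless n M lt m (LM n M lt p)}"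
          using Lq lt by blast
        then have "card {m \<in> X. hless n M lt m (LM n M lt q)} < card {m \<in> X. hless n M lt m (LM n M lt p)}"
          using X(1) by (simp add: psubset_card_mono)
        then show ?thesis using less.hyps q(1) by blast
      qed (simp add: zero)
    qed
  qed (simp add: zero)
qed

lemma exists_standard_remainder:
  fixes p :: "hmon \<Rightarrow>\<^sub>0 'k::field"
  assumes mo: "monomial_order n M lt" and X: "finite X" "X \<subseteq> SMh n M" and p: "Poly_Mapping.keys p \<subseteq> X"
    and reducers: "\<And>m. m \<in> X \<Longrightarrow> m \<notin> B \<Longrightarrow>
      \<exists>r\<in>S. r \<noteq> 0 \<and> Poly_Mapping.keys r \<subseteq> X \<and> LM n M lt r = m"
  shows "\<exists>q. Poly_Mapping.keys q \<subseteq> B \<and> p - q \<in> poly_module.span S"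
  using mo X p
proof (induction p rule: LM_induct)
  case zero
  show ?case by (intro exI[of _ 0]) (simp add: poly_module.span_zero)
next
  case (step p)
  let ?L = "LM n M lt p"
  have pS: "Poly_Mapping.keys p \<subseteq> SMh n M" using step.hyps(1) X(2) by blast
  have L: "?L \<in> X" using LM_in_keys[OF mo pS step.hyps(2)] step.hyps(1) by blast
  \<comment> \<open>A leading monomial in \<open>B\<close> is reduced by itself and moves into the remainder.\<close>
  obtain r where r: "r \<noteq> 0" "Poly_Mapping.keys r \<subseteq> X" "LM n M lt r = ?L"
    and rSB: "r \<in> S \<or> r = xmon ?L \<and> ?L \<in> B"
  proof (cases "?L \<in> B")
    case True
    have "Poly_Mapping.keys (xmon ?L :: hmon \<Rightarrow>\<^sub>0 'k) = {?L}" by (simp add: xmon_def)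
    moreover from this have "LM n M lt (xmon ?L :: hmon \<Rightarrow>\<^sub>0 'k) = ?L"
      using L X(2) by (intro LM_eqI[OF mo]) auto
    ultimately show thesis using that[of "xmon ?L"] True L by fastforce
  next
    case False
    then show thesis using reducers[OF L] that by blast
  qed
  define c where "c = Poly_Mapping.lookup p ?L / Poly_Mapping.lookup r ?L"
  define p' where "p' = p - smul c r"
  have rS: "Poly_Mapping.keys r \<subseteq> SMh n M" using r(2) X(2) by blast
  note red = top_reduction[OF mo step.hyps(2) pS r(1) rS r(3), folded c_def, folded p'_def]
  obtain q' where q': "Poly_Mapping.keys q' \<subseteq> B" "p' - q' \<in> poly_module.span S"
    using step.IH[of p'] red step.hyps(1) r(2) by blast
  show ?case
  proof (cases "r \<in> S")
    case True
    have "p - q' = (p' - q') + smul c r" unfolding p'_def by simp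
    also have "\<dots> \<in> poly_module.span S"
      using q'(2) poly_module.span_base[OF True] by (intro poly_module.span_add poly_module.span_scale)
    finally show ?thesis using q'(1) by blast
  next
    case False
    then have "Poly_Mapping.keys r \<subseteq> B" using rSB by (auto simp: xmon_def)
    then have "Poly_Mapping.keys (q' + smul c r) \<subseteq> B"
      using q'(1) keys_add[of q' "smul c r"] keys_smul_subset[of c r] by blast
    moreover have "p - (q' + smul c r) = p' - q'" unfolding p'_def by simp
    ultimately show ?thesis using q'(2) by metis
  qed
qed

lemma lin_comb_eq_0_if_distinct_LM:
  fixes xs :: "(hmon \<Rightarrow>\<^sub>0 'k::field) list"
  assumes mo: "monomial_order n M lt"
    and xs: "\<And>x. x \<in> set xs \<Longrightarrow> x \<noteq> 0 \<and> Poly_Mapping.keys x \<subseteq> SMh n M"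
    and dist: "distinct (map (LM n M lt) xs)" and "lin_comb c xs = 0"
  shows "\<forall>i<length xs. c i = 0"
proof (rule ccontr)
  assume "\<not> (\<forall>i<length xs. c i = 0)"
  define S where "S = {i. i < length xs \<and> c i \<noteq> 0}"
  have S: "S \<noteq> {}" "finite S" using \<open>\<not> (\<forall>i<length xs. c i = 0)\<close> unfolding S_def by auto
  have LMS: "LM n M lt (xs ! i) \<in> Poly_Mapping.keys (xs ! i)" "Poly_Mapping.keys (xs ! i) \<subseteq> SMh n M"
    if "i < length xs" for i
    using LM_in_keys[OF mo] xs nth_mem[OF that] by blast+
  obtain m where m: "m \<in> (\<lambda>i. LM n M lt (xs ! i)) ` S"
    "\<forall>m'\<in>(\<lambda>i. LM n M lt (xs ! i)) ` S. m' \<noteq> m \<longrightarrow> hless n M lt m' m"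
    using exists_hless_greatest[OF mo, of "(\<lambda>i. LM n M lt (xs ! i)) ` S"] S LMS unfolding S_def by blast
  then obtain i0 where i0: "i0 < length xs" "c i0 \<noteq> 0" "m = LM n M lt (xs ! i0)" unfolding S_def by blast
  have others: "c i * Poly_Mapping.lookup (xs ! i) m = 0" if "i < length xs" "i \<noteq> i0" for i
  proof (cases "c i = 0")
    case False
    then have "LM n M lt (xs ! i) \<noteq> m"
      using nth_eq_iff_index_eq[OF dist, of i i0] i0 that by simp
    then have "hless n M lt (LM n M lt (xs ! i)) m" using m(2) False that unfolding S_def by blast
    then have "m \<notin> Poly_Mapping.keys (xs ! i)" using not_hless_LM[OF mo LMS(2)[OF that(1)]] by blast
    then show ?thesis by (simp add: in_keys_iff)
  qed simp
  have "Poly_Mapping.lookup (lin_comb c xs) m = (\<Sum>i<length xs. c i * Poly_Mapping.lookup (xs ! i) m)"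
    by (simp add: lin_comb_def lookup_sum)
  also have "\<dots> = c i0 * Poly_Mapping.lookup (xs ! i0) m
      + (\<Sum>i\<in>{..<length xs} - {i0}. c i * Poly_Mapping.lookup (xs ! i) m)"
    using i0(1) by (simp add: sum.remove)
  also have "(\<Sum>i\<in>{..<length xs} - {i0}. c i * Poly_Mapping.lookup (xs ! i) m) = 0"
    using others by (intro sum.neutral) auto
  finally have "Poly_Mapping.lookup (lin_comb c xs) m = c i0 * Poly_Mapping.lookup (xs ! i0) m" by simp
  moreover have "Poly_Mapping.lookup (xs ! i0) m \<noteq> 0" using LMS(1)[OF i0(1)] i0(3) by (simp add: in_keys_iff)
  ultimately show False using \<open>lin_comb c xs = 0\<close> i0(2) by simp
qed

section \<open>Reduced row echelon forms\<close>

definition row_span :: "'a::field mat \<Rightarrow> 'a vec set" where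
  "row_span A = {transpose_mat A *\<^sub>v y | y. y \<in> carrier_vec (dim_row A)}"

lemma index_transpose_mult_vec:
  fixes C :: "'a::field mat"
  assumes "C \<in> carrier_mat nr nc" "y \<in> carrier_vec nr" "j < nc"
  shows "(transpose_mat C *\<^sub>v y) $ j = (\<Sum>k<nr. C $$ (k, j) * y $ k)"
proof -
  have "(transpose_mat C *\<^sub>v y) $ j = col C j \<bullet> y" using assms by simp
  also have "\<dots> = (\<Sum>k<nr. C $$ (k, j) * y $ k)"
    unfolding scalar_prod_def atLeast0LessThan using assms by (intro sum.cong) auto
  finally show ?thesis .
qed

lemma row_eq_transpose_mult_unit_vec:
  fixes C :: "'a::field mat"
  assumes C: "C \<in> carrier_mat nr nc" and i: "i < nr"
  shows "row C i = transpose_mat C *\<^sub>v unit_vec nr i"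
proof (rule eq_vecI)
  fix j assume "j < dim_vec (transpose_mat C *\<^sub>v unit_vec nr i)"
  then have j: "j < nc" using C by simp
  have "(transpose_mat C *\<^sub>v unit_vec nr i) $ j = (\<Sum>k<nr. if k = i then C $$ (i, j) else 0)"
    unfolding index_transpose_mult_vec[OF C unit_vec_carrier j] by (intro sum.cong) (auto simp: unit_vec_def)
  then show "row C i $ j = (transpose_mat C *\<^sub>v unit_vec nr i) $ j" using C i j by simp
qed (use C in simp)

lemma row_in_row_span:
  assumes "C \<in> carrier_mat nr nc" "i < nr"
  shows "row C i \<in> row_span C"
  unfolding row_span_def row_eq_transpose_mult_unit_vec[OF assms]
  using assms(1) by (intro CollectI exI[of _ "unit_vec nr i"]) simp

lemma row_span_carrier: "C \<in> carrier_mat nr nc \<Longrightarrow> row_span C \<subseteq> carrier_vec nc"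
  unfolding row_span_def by auto

lemma row_span_mult_subset:
  fixes A :: "'a::field mat"
  assumes A: "A \<in> carrier_mat nr nc" and P: "P \<in> carrier_mat nr nr"
  shows "row_span (P * A) \<subseteq> row_span A"
proof
  fix w assume "w \<in> row_span (P * A)"
  then obtain y where y: "y \<in> carrier_vec nr" "w = transpose_mat (P * A) *\<^sub>v y"
    using A P unfolding row_span_def by auto
  then have "w = transpose_mat A *\<^sub>v (transpose_mat P *\<^sub>v y)"
    using A P transpose_mult[OF P A] by (auto intro: assoc_mult_mat_vec)
  then show "w \<in> row_span A" unfolding row_span_def using A P y(1) by auto
qed

lemma
  fixes A :: "'a::field mat"
  assumes A: "A \<in> carrier_mat nr nc"
  shows rref_carrier: "rref A \<in> carrier_mat nr nc"
    and row_echelon_form_rref: "row_echelon_form (rref A)"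
    and row_span_rref: "row_span (rref A) = row_span A"
proof -
  obtain P Q where PQ: "rref A = P * A" "P \<in> carrier_mat nr nr" "Q \<in> carrier_mat nr nr" "Q * P = 1\<^sub>m nr"
    using gauss_jordan_single(4)[OF A refl] unfolding rref_def by blast
  show C: "rref A \<in> carrier_mat nr nc" "row_echelon_form (rref A)"
    using gauss_jordan_single(2,3)[OF A refl] unfolding rref_def by auto
  have "Q * rref A = A" using PQ A by (simp add: assoc_mult_mat[symmetric, of Q nr nr P nr A nc])
  then have "row_span A \<subseteq> row_span (rref A)" using row_span_mult_subset[OF C(1) PQ(3)] by simp
  moreover have "row_span (rref A) \<subseteq> row_span A" using row_span_mult_subset[OF A PQ(2)] PQ(1) by simp
  ultimately show "row_span (rref A) = row_span A" by (rule antisym[rotated])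
qed

definition leading_positions :: "nat \<Rightarrow> 'a::field vec set \<Rightarrow> nat set" where
  "leading_positions nc W = {p. p < nc \<and> (\<exists>w\<in>W. w $ p \<noteq> 0 \<and> (\<forall>j<p. w $ j = 0))}"

text \<open>The reduced row echelon basis of a subspace \<open>W\<close> of \<open>K\<^sup>n\<^sup>c\<close>, described intrinsically
  in terms of \<open>W\<close>; the nonzero rows of every reduced row echelon matrix with row span \<open>W\<close>
  form this set, so they are determined by \<open>W\<close>.\<close>

definition reduced_basis :: "nat \<Rightarrow> 'a::field vec set \<Rightarrow> 'a vec set" where
  "reduced_basis nc W = {v \<in> W. \<exists>p\<in>leading_positions nc W. v $ p = 1 \<and> (\<forall>j<p. v $ j = 0) \<and>
      (\<forall>q\<in>leading_positions nc W. q \<noteq> p \<longrightarrow> v $ q = 0)}"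

lemma pivot_fun_strict_mono:
  assumes C: "C \<in> carrier_mat nr nc" and p: "pivot_fun C f nc"
    and "i < i'" "i' < nr" "f i' < nc"
  shows "f i < f i'"
proof -
  have "i + (i' - i) = i'" using \<open>i < i'\<close> by simp
  then show ?thesis
    using pivot_bound[OF carrier_matD(1)[OF C] p, of i "i' - i"] assms(3-5) by simp
qed

context
  fixes C :: "'a::field mat" and nr nc f
  assumes C: "C \<in> carrier_mat nr nc" and pivot: "pivot_fun C f nc"
begin

definition pivot_rows :: "nat set" where
  "pivot_rows = {i. i < nr \<and> f i < nc}"

lemmas pivot_props = pivot_funD[OF carrier_matD(1)[OF C] pivot]

lemma entry_pivot: "i \<in> pivot_rows \<Longrightarrow> C $$ (i, f i) = 1"
  using pivot_props(4) unfolding pivot_rows_def by blast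

lemma entry_pivot_col: "i \<in> pivot_rows \<Longrightarrow> i' < nr \<Longrightarrow> i' \<noteq> i \<Longrightarrow> C $$ (i', f i) = 0"
  using pivot_props(5) unfolding pivot_rows_def by blast

lemma entry_before_pivot: "i < nr \<Longrightarrow> j < f i \<Longrightarrow> C $$ (i, j) = 0"
  using pivot_props(2) by blast

lemma entry_non_pivot_row:
  assumes "i < nr" "i \<notin> pivot_rows" "j < nc"
  shows "C $$ (i, j) = 0"
proof -
  have "f i = nc" using pivot_props(1)[OF assms(1)] assms(1,2) unfolding pivot_rows_def by simp
  then show ?thesis using entry_before_pivot assms by simp
qed

lemma row_span_entry:
  assumes w: "w \<in> row_span C" and j: "j < nc"
  shows "w $ j = (\<Sum>k\<in>pivot_rows. C $$ (k, j) * w $ f k)"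
proof -
  obtain y where y: "y \<in> carrier_vec nr" "w = transpose_mat C *\<^sub>v y"
    using w C unfolding row_span_def by auto
  have restrict: "(transpose_mat C *\<^sub>v y) $ j = (\<Sum>k\<in>pivot_rows. C $$ (k, j) * y $ k)" if "j < nc" for j
    unfolding index_transpose_mult_vec[OF C y(1) that]
    by (rule sum.mono_neutral_right) (auto simp: pivot_rows_def entry_non_pivot_row that)
  have "w $ f k = y $ k" if "k \<in> pivot_rows" for k
  proof -
    have "f k < nc" using that by (simp add: pivot_rows_def)
    then have "w $ f k = (\<Sum>k'\<in>pivot_rows. if k' = k then y $ k else 0)"
      unfolding y(2) restrict[OF \<open>f k < nc\<close>] using that pivot_rows_def
      by (intro sum.cong) (auto simp: entry_pivot entry_pivot_col)
    then show ?thesis using that by (simp add: pivot_rows_def)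
  qed
  then show ?thesis unfolding y(2) restrict[OF j] by (intro sum.cong) auto
qed

lemma leading_positions_row_span:
  "leading_positions nc (row_span C) = f ` pivot_rows"
proof
  show "f ` pivot_rows \<subseteq> leading_positions nc (row_span C)"
  proof
    fix p assume "p \<in> f ` pivot_rows"
    then obtain i where i: "i \<in> pivot_rows" "p = f i" by auto
    then have "i < nr" "f i < nc" by (auto simp: pivot_rows_def)
    then show "p \<in> leading_positions nc (row_span C)"
      unfolding leading_positions_def using i row_in_row_span[OF C] C entry_pivot entry_before_pivot
      by (intro CollectI conjI bexI[of _ "row C i"]) auto
  qed
next
  show "leading_positions nc (row_span C) \<subseteq> f ` pivot_rows"
  proof
    fix p assume "p \<in> leading_positions nc (row_span C)"
    then obtain w where p: "p < nc" "w \<in> row_span C" "w $ p \<noteq> 0" "\<forall>j<p. w $ j = 0"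
      unfolding leading_positions_def by auto
    define S where "S = {k \<in> pivot_rows. w $ f k \<noteq> 0}"
    have "S \<noteq> {}"
      using row_span_entry[OF p(2,1)] p(3) sum.neutral unfolding S_def by force
    moreover have "finite S" unfolding S_def pivot_rows_def by auto
    ultimately have i0: "Min S \<in> S" "\<And>k. k \<in> S \<Longrightarrow> Min S \<le> k" by auto
    then have fi0: "Min S \<in> pivot_rows" "f (Min S) < nc" "w $ f (Min S) \<noteq> 0"
      unfolding S_def pivot_rows_def by auto
    have "w $ j = 0" if j: "j < f (Min S)" for j
    proof -
      have "C $$ (k, j) * w $ f k = 0" if "k \<in> pivot_rows" for k
      proof (cases "k \<in> S")
        case True
        then have "j < f k"
          using i0(2)[OF True] j fi0(1) that pivot_fun_strict_mono[OF C pivot, of "Min S" k]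
          unfolding pivot_rows_def by (cases "Min S = k") auto
        then show ?thesis using that entry_before_pivot unfolding pivot_rows_def by simp
      qed (use that in \<open>simp add: S_def\<close>)
      then show ?thesis using row_span_entry[OF p(2)] j fi0(2) by simp
    qed
    then have "p = f (Min S)" using p(3,4) fi0(3) by (meson linorder_neqE_nat)
    then show "p \<in> f ` pivot_rows" using fi0(1) by blast
  qed
qed

lemma reduced_basis_subset_rows:
  "reduced_basis nc (row_span C) \<subseteq> {row C i | i. i < nr \<and> row C i \<noteq> 0\<^sub>v nc}"
proof
  fix v assume "v \<in> reduced_basis nc (row_span C)"
  then obtain i where v: "v \<in> row_span C" "i \<in> pivot_rows" "v $ f i = 1"
    "\<forall>k\<in>pivot_rows. f k \<noteq> f i \<longrightarrow> v $ f k = 0"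
    unfolding reduced_basis_def leading_positions_row_span by blast
  have i: "i < nr" "f i < nc" using v(2) by (auto simp: pivot_rows_def)
  have vf: "v $ f k = (if k = i then 1 else 0)" if "k \<in> pivot_rows" for k
    using v that pivot_fun_strict_mono[OF C pivot, of i k] pivot_fun_strict_mono[OF C pivot, of k i]
    unfolding pivot_rows_def by (cases k i rule: linorder_cases) auto
  have "v $ j = C $$ (i, j)" if "j < nc" for j
  proof -
    have "v $ j = (\<Sum>k\<in>pivot_rows. if k = i then C $$ (i, j) else 0)"
      unfolding row_span_entry[OF v(1) that] using vf by (intro sum.cong) auto
    then show ?thesis using v(2) by (simp add: pivot_rows_def)
  qed
  then have "v = row C i"
    using row_span_carrier[OF C] v(1) C i by (intro eq_vecI) auto
  moreover have "row C i \<noteq> 0\<^sub>v nc"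
  proof
    assume "row C i = 0\<^sub>v nc"
    then have "row C i $ f i = 0" using i by simp
    then show False using entry_pivot[OF v(2)] i C by simp
  qed
  ultimately show "v \<in> {row C i | i. i < nr \<and> row C i \<noteq> 0\<^sub>v nc}" using i by blast
qed

lemma nonzero_rows_subset_reduced_basis:
  "{row C i | i. i < nr \<and> row C i \<noteq> 0\<^sub>v nc} \<subseteq> reduced_basis nc (row_span C)"
proof
  fix v assume "v \<in> {row C i | i. i < nr \<and> row C i \<noteq> 0\<^sub>v nc}"
  then obtain i where i: "i < nr" "row C i \<noteq> 0\<^sub>v nc" "v = row C i" by blast
  have "f i \<noteq> nc" using pivot_fun_zero_row_iff[OF pivot C i(1)] i(2) by simp
  then have piv: "i \<in> pivot_rows" "f i < nc"
    using pivot_props(1)[OF i(1)] i(1) unfolding pivot_rows_def by auto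
  have "v \<in> row_span C" using row_in_row_span[OF C i(1)] i(3) by simp
  moreover have "v $ f i = 1" using i(1,3) entry_pivot[OF piv(1)] piv(2) C by simp
  moreover have "\<forall>j<f i. v $ j = 0" using i(1,3) entry_before_pivot[OF i(1)] piv(2) C by simp
  moreover have "\<forall>q\<in>f ` pivot_rows. q \<noteq> f i \<longrightarrow> v $ q = 0"
  proof (intro ballI impI)
    fix q assume "q \<in> f ` pivot_rows" "q \<noteq> f i"
    then obtain k where k: "k \<in> pivot_rows" "q = f k" "k \<noteq> i" by auto
    then have "f k < nc" by (simp add: pivot_rows_def)
    then show "v $ q = 0" using i(1,3) entry_pivot_col[OF k(1) i(1)] k C by simp
  qed
  ultimately show "v \<in> reduced_basis nc (row_span C)"
    unfolding reduced_basis_def leading_positions_row_span using piv(1) by blast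
qed

lemma reduced_basis_row_span:
  "reduced_basis nc (row_span C) = {row C i | i. i < nr \<and> row C i \<noteq> 0\<^sub>v nc}"
  using reduced_basis_subset_rows nonzero_rows_subset_reduced_basis by (rule equalityI)

end

lemma (in vec_space) rank_le_dim_row:
  assumes "A \<in> carrier_mat n nc"
  shows "rank A \<le> n"
proof -
  have "set (cols A) \<subseteq> carrier_vec n" using assms by (auto simp: cols_def)
  then have "vectorspace.dim class_ring (span_vs (set (cols A))) \<le> dim"
    using subspace_dim[OF span_is_subspace fin_dim fin_dim_span_cols[OF assms]] by simp
  then show ?thesis unfolding rank_def dim_is_n .
qed

text \<open>If the rows of \<open>A\<close> are independent, every row of its row echelon form \<open>C = P A\<close> has a
  pivot; since \<open>A = Q C\<close> with \<open>Q = P\<^sup>-\<^sup>1\<close>, the pivot columns of \<open>A\<close> are the columns of the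
  invertible matrix \<open>Q\<close>.\<close>

lemma full_rank_if_left_kernel_trivial:
  fixes A :: "'a::field mat"
  assumes A: "A \<in> carrier_mat nr nc"
    and ker: "\<And>y. y \<in> carrier_vec nr \<Longrightarrow> transpose_mat A *\<^sub>v y = 0\<^sub>v nc \<Longrightarrow> y = 0\<^sub>v nr"
  shows "full_rank A"
proof -
  obtain P Q where PQ: "gauss_jordan_single A = P * A" "P \<in> carrier_mat nr nr" "Q \<in> carrier_mat nr nr"
    "P * Q = 1\<^sub>m nr" "Q * P = 1\<^sub>m nr"
    using gauss_jordan_single(4)[OF A refl] by blast
  define C where "C = gauss_jordan_single A"
  have C: "C \<in> carrier_mat nr nc" "row_echelon_form C"
    using gauss_jordan_single(2,3)[OF A refl] C_def by auto
  obtain f where f: "pivot_fun C f nc" using C unfolding row_echelon_form_def by auto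
  have QC: "Q * C = A" using PQ A C_def by (simp add: assoc_mult_mat[symmetric, of Q nr nr P nr A nc])
  have all_pivots: "f i < nc" if i: "i < nr" for i
  proof (rule ccontr)
    assume "\<not> f i < nc"
    then have "row C i = 0\<^sub>v nc"
      using pivot_fun_zero_row_iff[OF f C(1) i] pivot_funD(1)[OF carrier_matD(1)[OF C(1)] f i] by simp
    moreover have "row C i = transpose_mat A *\<^sub>v (transpose_mat P *\<^sub>v unit_vec nr i)"
      using row_eq_transpose_mult_unit_vec[OF C(1) i] transpose_mult[OF PQ(2) A] A PQ(2)
      unfolding C_def PQ(1) by (auto intro: assoc_mult_mat_vec)
    ultimately have "transpose_mat P *\<^sub>v unit_vec nr i = 0\<^sub>v nr" using ker PQ(2) by simp
    moreover have "transpose_mat Q *\<^sub>v 0\<^sub>v nr = (0\<^sub>v nr :: 'a vec)" using PQ(3) by (intro eq_vecI) auto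
    ultimately have "transpose_mat (P * Q) *\<^sub>v unit_vec nr i = 0\<^sub>v nr"
      using transpose_mult[OF PQ(2,3)] PQ(2,3) by (simp add: assoc_mult_mat_vec)
    then have "unit_vec nr i $ i = (0\<^sub>v nr :: 'a vec) $ i" using PQ(4) by simp
    then show False using i by simp
  qed
  have "col A (f i) = col Q i" if i: "i < nr" for i
  proof -
    have "col C (f i) = unit_vec nr i"
      using pivot_funD(4,5)[OF carrier_matD(1)[OF C(1)] f i _ ] all_pivots[OF i] C(1) i
      by (intro eq_vecI) (auto simp: unit_vec_def)
    then have "col A (f i) = Q *\<^sub>v unit_vec nr i"
      using QC col_mult2[OF PQ(3) C(1)] all_pivots[OF i] by metis
    then show ?thesis using col_mult2[OF PQ(3) one_carrier_mat, of i] PQ(3) i by simp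
  qed
  then have cols_sub: "set (cols Q) \<subseteq> set (cols A)"
    using PQ(3) A all_pivots by (auto simp: cols_def) (metis imageI lessThan_atLeast0 lessThan_iff)
  interpret vs: vec_space "TYPE('a)" nr .
  have "det P * det Q = 1" using det_mult[OF PQ(2,3)] PQ(4) by simp
  then have rankQ: "vs.rank Q = nr" using vs.low_rank_det_zero[OF PQ(3)] by force
  then have "distinct (cols Q)" using vs.non_distinct_low_rank[OF PQ(3)] by force
  then have "card (set (cols Q)) = nr" "vs.lin_indpt (set (cols Q))"
    using distinct_card vs.full_rank_lin_indpt[OF PQ(3) rankQ] PQ(3) by force+
  then have "nr \<le> vs.rank A" using vs.rank_ge_card_indpt[OF A cols_sub] by simp
  then show ?thesis
    unfolding full_rank_def using vs.rank_le_dim_row[OF A] vs.rank_le_nc[OF A] A by simp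
qed

section \<open>Macaulay matrices\<close>

definition poly_of_vec :: "'a list \<Rightarrow> 'k::comm_monoid_add vec \<Rightarrow> ('a \<Rightarrow>\<^sub>0 'k)" where
  "poly_of_vec cs v = (\<Sum>j<length cs. Poly_Mapping.single (cs ! j) (v $ j))"

lemma lookup_poly_of_vec:
  assumes "distinct cs" "j < length cs"
  shows "Poly_Mapping.lookup (poly_of_vec cs v) (cs ! j) = v $ j"
proof -
  have "Poly_Mapping.lookup (poly_of_vec cs v) (cs ! j) = (\<Sum>j'<length cs. if j' = j then v $ j else 0)"
    unfolding poly_of_vec_def lookup_sum
    by (intro sum.cong refl) (auto simp: lookup_single nth_eq_iff_index_eq assms when_def)
  then show ?thesis using assms(2) by simp
qed

lemma lookup_poly_of_vec_notin:
  "m \<notin> set cs \<Longrightarrow> Poly_Mapping.lookup (poly_of_vec cs v) m = 0"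
  unfolding poly_of_vec_def lookup_sum by (intro sum.neutral) (auto simp: lookup_single when_def)

lemma inj_on_poly_of_vec:
  "distinct cs \<Longrightarrow> inj_on (poly_of_vec cs) (carrier_vec (length cs))"
proof (rule inj_onI)
  fix v w assume cs: "distinct cs" and vw: "v \<in> carrier_vec (length cs)" "w \<in> carrier_vec (length cs)"
    and eq: "poly_of_vec cs v = poly_of_vec cs w"
  show "v = w"
  proof (rule eq_vecI)
    fix j assume "j < dim_vec w"
    then have "j < length cs" using vw by simp
    then show "v $ j = w $ j" using lookup_poly_of_vec[OF cs, of j] eq by metis
  qed (use vw in simp)
qed

lemma poly_of_vec_zero: "poly_of_vec cs (0\<^sub>v (length cs)) = 0"
  unfolding poly_of_vec_def by (intro sum.neutral) auto

lemma Rows_eq_poly_of_nonzero_rows: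
  fixes C :: "'k::field mat"
  assumes cs: "distinct cs" and C: "C \<in> carrier_mat nr (length cs)"
  shows "Rows cs C = poly_of_vec cs ` {row C i | i. i < nr \<and> row C i \<noteq> 0\<^sub>v (length cs)}"
proof -
  have row: "(\<Sum>j<dim_col C. Poly_Mapping.single (cs ! j) (C $$ (i, j))) = poly_of_vec cs (row C i)"
    if "i < nr" for i
    unfolding poly_of_vec_def using C that by (intro sum.cong) auto
  have zero: "poly_of_vec cs (row C i) = 0 \<longleftrightarrow> row C i = 0\<^sub>v (length cs)" for i
    using inj_on_poly_of_vec[OF cs] C poly_of_vec_zero[of cs]
    by (metis carrier_matD(2) inj_onD row_carrier zero_carrier_vec)
  have "Rows cs C = {poly_of_vec cs (row C i) | i. i < nr \<and> poly_of_vec cs (row C i) \<noteq> 0}"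
    unfolding Rows_def using C row by force
  then show ?thesis unfolding zero by blast
qed

lemma Rows_rref_eq_if_row_span_eq:
  fixes A B :: "'k::field mat"
  assumes cs: "distinct cs" and A: "A \<in> carrier_mat nrA (length cs)" and B: "B \<in> carrier_mat nrB (length cs)"
    and "row_span A = row_span B"
  shows "Rows cs (rref A) = Rows cs (rref B)"
proof -
  have "Rows cs (rref X) = poly_of_vec cs ` reduced_basis (length cs) (row_span X)"
    if X: "X \<in> carrier_mat nr (length cs)" for X :: "'k mat" and nr
  proof -
    obtain f where "pivot_fun (rref X) f (length cs)"
      using rref_carrier[OF X] row_echelon_form_rref[OF X] unfolding row_echelon_form_def by auto
    then show ?thesis
      using Rows_eq_poly_of_nonzero_rows[OF cs rref_carrier[OF X]]
        reduced_basis_row_span[OF rref_carrier[OF X]] row_span_rref[OF X] by simp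
  qed
  then show ?thesis using A B \<open>row_span A = row_span B\<close> by metis
qed

lemma macaulay_carrier: "macaulay cs xs \<in> carrier_mat (length xs) (length cs)"
  unfolding macaulay_def by simp

lemma poly_of_vec_macaulay:
  fixes xs :: "(hmon \<Rightarrow>\<^sub>0 'k::field) list"
  assumes cs: "distinct cs" and keys: "\<forall>p\<in>set xs. Poly_Mapping.keys p \<subseteq> set cs"
    and y: "y \<in> carrier_vec (length xs)"
  shows "poly_of_vec cs (transpose_mat (macaulay cs xs) *\<^sub>v y) = lin_comb (\<lambda>i. y $ i) xs"
proof (rule poly_mapping_eqI)
  fix m
  have lookup_lin_comb: "Poly_Mapping.lookup (lin_comb (\<lambda>i. y $ i) xs) m
      = (\<Sum>i<length xs. y $ i * Poly_Mapping.lookup (xs ! i) m)"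
    by (simp add: lin_comb_def lookup_sum)
  show "Poly_Mapping.lookup (poly_of_vec cs (transpose_mat (macaulay cs xs) *\<^sub>v y)) m
      = Poly_Mapping.lookup (lin_comb (\<lambda>i. y $ i) xs) m"
  proof (cases "m \<in> set cs")
    case True
    then obtain j where j: "j < length cs" "m = cs ! j" by (auto simp: in_set_conv_nth)
    then have "Poly_Mapping.lookup (poly_of_vec cs (transpose_mat (macaulay cs xs) *\<^sub>v y)) m
        = (transpose_mat (macaulay cs xs) *\<^sub>v y) $ j"
      using lookup_poly_of_vec[OF cs] by simp
    also have "\<dots> = (\<Sum>i<length xs. macaulay cs xs $$ (i, j) * y $ i)"
      by (rule index_transpose_mult_vec[OF macaulay_carrier y j(1)])
    also have "\<dots> = (\<Sum>i<length xs. y $ i * Poly_Mapping.lookup (xs ! i) m)"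
      using j by (intro sum.cong) (auto simp: macaulay_def mult.commute)
    finally show ?thesis unfolding lookup_lin_comb .
  next
    case False
    then have "m \<notin> Poly_Mapping.keys (xs ! i)" if "i < length xs" for i
      using keys that by auto
    then show ?thesis
      unfolding lookup_lin_comb lookup_poly_of_vec_notin[OF False]
      by (intro sum.neutral[symmetric]) (auto simp: in_keys_iff)
  qed
qed

lemma poly_of_vec_row_span_macaulay:
  fixes xs :: "(hmon \<Rightarrow>\<^sub>0 'k::field) list"
  assumes cs: "distinct cs" and keys: "\<forall>p\<in>set xs. Poly_Mapping.keys p \<subseteq> set cs"
  shows "poly_of_vec cs ` row_span (macaulay cs xs) = poly_module.span (set xs)"
proof -
  have "row_span (macaulay cs xs) = (\<lambda>y. transpose_mat (macaulay cs xs) *\<^sub>v y) ` carrier_vec (length xs)"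
    unfolding row_span_def Setcompr_eq_image by (simp add: macaulay_def)
  then have "poly_of_vec cs ` row_span (macaulay cs xs)
      = (\<lambda>y. poly_of_vec cs (transpose_mat (macaulay cs xs) *\<^sub>v y)) ` carrier_vec (length xs)"
    by (simp add: image_image)
  also have "\<dots> = (\<lambda>y. lin_comb (\<lambda>i. y $ i) xs) ` carrier_vec (length xs)"
    using poly_of_vec_macaulay[OF cs keys] by (rule image_cong[OF refl])
  also have "\<dots> = range (\<lambda>c. lin_comb c xs)"
  proof
    show "(\<lambda>y. lin_comb (\<lambda>i. y $ i) xs) ` carrier_vec (length xs) \<subseteq> range (\<lambda>c. lin_comb c xs)"
      by (rule image_subsetI) (rule rangeI)
    show "range (\<lambda>c. lin_comb c xs) \<subseteq> (\<lambda>y. lin_comb (\<lambda>i. y $ i) xs) ` carrier_vec (length xs)"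
    proof (rule image_subsetI)
      fix c
      have "lin_comb c xs = lin_comb (\<lambda>i. vec (length xs) c $ i) xs"
        unfolding lin_comb_def by (intro sum.cong) auto
      then show "lin_comb c xs \<in> (\<lambda>y. lin_comb (\<lambda>i. y $ i) xs) ` carrier_vec (length xs)"
        by (rule image_eqI) simp
    qed
  qed
  finally show ?thesis by (simp add: span_set_eq_lin_combs)
qed

lemma Rows_rref_macaulay_eq:
  fixes xs ys :: "(hmon \<Rightarrow>\<^sub>0 'k::field) list"
  assumes cs: "distinct cs"
    and keys: "\<forall>p\<in>set xs. Poly_Mapping.keys p \<subseteq> set cs" "\<forall>p\<in>set ys. Poly_Mapping.keys p \<subseteq> set cs"
    and span: "poly_module.span (set xs) = poly_module.span (set ys)"
  shows "Rows cs (rref (macaulay cs xs)) = Rows cs (rref (macaulay cs ys))"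
proof (rule Rows_rref_eq_if_row_span_eq[OF cs macaulay_carrier macaulay_carrier])
  show "row_span (macaulay cs xs) = row_span (macaulay cs ys)"
    using poly_of_vec_row_span_macaulay[OF cs keys(1)] poly_of_vec_row_span_macaulay[OF cs keys(2)] span
      inj_on_image_eq_iff[OF inj_on_poly_of_vec[OF cs] row_span_carrier row_span_carrier]
      macaulay_carrier by metis
qed

lemma full_rank_macaulay:
  fixes xs :: "(hmon \<Rightarrow>\<^sub>0 'k::field) list"
  assumes cs: "distinct cs" and keys: "\<forall>p\<in>set xs. Poly_Mapping.keys p \<subseteq> set cs"
    and indep: "\<And>c. lin_comb c xs = 0 \<Longrightarrow> \<forall>i<length xs. c i = 0"
  shows "full_rank (macaulay cs xs)"
proof (rule full_rank_if_left_kernel_trivial[OF macaulay_carrier])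
  fix y assume y: "y \<in> carrier_vec (length xs)" "transpose_mat (macaulay cs xs) *\<^sub>v y = 0\<^sub>v (length cs)"
  then have "lin_comb (\<lambda>i. y $ i) xs = 0"
    using poly_of_vec_macaulay[OF cs keys y(1)] poly_of_vec_zero by metis
  then show "y = 0\<^sub>v (length xs)" using indep y(1) by (intro eq_vecI) auto
qed

locale homogeneous_sparse_GB =
  fixes n :: nat and M :: "(nat \<Rightarrow> real) set" and lt :: "zvec \<Rightarrow> zvec \<Rightarrow> bool"
    and I G :: "(hmon \<Rightarrow>\<^sub>0 'k::field) set"
  assumes polytope: "polytope n M" and monomial_order: "monomial_order n M lt"
    and ideal: "is_ideal n M I" and GB: "sparse_GB n M lt I G"
    and finite_G: "finite G" and homogeneous_G: "\<forall>g\<in>G. homogeneous g"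
begin

lemma keys_ideal: "p \<in> I \<Longrightarrow> Poly_Mapping.keys p \<subseteq> SMh n M"
  using ideal unfolding is_ideal_def hring_def by blast

lemma ideal_mult: "r \<in> hring n M \<Longrightarrow> p \<in> I \<Longrightarrow> r * p \<in> I"
  using ideal unfolding is_ideal_def by blast

lemma ideal_subspace: "poly_module.subspace I"
proof (rule poly_module.subspaceI)
  show "0 \<in> I" "\<And>p q. p \<in> I \<Longrightarrow> q \<in> I \<Longrightarrow> p + q \<in> I"
    using ideal unfolding is_ideal_def by blast+
  fix c :: 'k and p assume "p \<in> I"
  moreover have "Poly_Mapping.single 0 c \<in> hring n M"
    unfolding hring_def using SMh.SMh_zero by auto
  ultimately show "smul c p \<in> I" unfolding smul_def by (rule ideal_mult[rotated])
qed

lemma xmon_mult_ideal: "t \<in> SMh n M \<Longrightarrow> p \<in> I \<Longrightarrow> xmon t * p \<in> I"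
  by (rule ideal_mult) (simp add: hring_def xmon_def)

lemma generator_in_ideal: "g \<in> G \<Longrightarrow> g \<in> I"
  using GB unfolding sparse_GB_def by blast

lemma keys_generator_snd:
  assumes "g \<in> G" "g \<noteq> 0" "m \<in> Poly_Mapping.keys g"
  shows "snd m = snd (LM n M lt g)"
proof -
  obtain e where "is_homog e g" using homogeneous_G assms(1) unfolding homogeneous_def by blast
  moreover have "LM n M lt g \<in> Poly_Mapping.keys g"
    using LM_in_keys[OF monomial_order keys_ideal[OF generator_in_ideal] assms(2)] assms(1) .
  ultimately show ?thesis using assms(3) unfolding is_homog_def by auto
qed

lemma xmon_mult_generator:
  assumes g: "g \<in> G" "g \<noteq> 0" and t: "t \<in> SMh n M" and m: "t + LM n M lt g = m" "m \<in> mons n M E"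
    and deg: "sdeg n M t + sdeg n M (LM n M lt g) = sdeg n M m"
  shows "xmon t * g \<in> I" "xmon t * g \<noteq> 0" "Poly_Mapping.keys (xmon t * g) \<subseteq> mons n M E"
    "LM n M lt (xmon t * g) = m"
proof -
  have kg: "Poly_Mapping.keys g \<subseteq> SMh n M" using keys_ideal[OF generator_in_ideal[OF g(1)]] .
  show "xmon t * g \<in> I" using xmon_mult_ideal[OF t generator_in_ideal[OF g(1)]] .
  show "LM n M lt (xmon t * g) = m"
    using LM_xmon_mult[OF monomial_order kg g(2) _ t] keys_generator_snd[OF g] deg m(1) by simp
  have "m \<in> Poly_Mapping.keys (xmon t * g)"
    using LM_in_keys[OF monomial_order kg g(2)] m(1) by (auto simp: keys_xmon_mult)
  then show "xmon t * g \<noteq> 0" by auto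
  show "Poly_Mapping.keys (xmon t * g) \<subseteq> mons n M E"
  proof
    fix x assume "x \<in> Poly_Mapping.keys (xmon t * g)"
    then obtain b where b: "b \<in> Poly_Mapping.keys g" "x = t + b" by (auto simp: keys_xmon_mult)
    then have "x \<in> SMh n M" using kg t SMh_add_closed by blast
    moreover have "snd x = snd m" using b m(1) keys_generator_snd[OF g b(1)] by auto
    ultimately show "x \<in> mons n M E" using m(2) unfolding mons_def by simp
  qed
qed

lemma exists_xmon_mult_generator:
  assumes "m \<in> Nset n M lt G E"
  obtains r where "r \<in> I" "r \<noteq> 0" "Poly_Mapping.keys r \<subseteq> mons n M E" "LM n M lt r = m"
proof -
  obtain g t where g: "g \<in> G" "g \<noteq> 0" and t: "t \<in> SMh n M" "LM n M lt g + t = m"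
    "sdeg n M (LM n M lt g) + sdeg n M t = sdeg n M m"
    using assms unfolding Nset_def ddvd_def by blast
  have "m \<in> mons n M E" using assms unfolding Nset_def by blast
  moreover have "t + LM n M lt g = m" "sdeg n M t + sdeg n M (LM n M lt g) = sdeg n M m"
    using t(2,3) by (simp_all add: add.commute)
  ultimately show thesis using xmon_mult_generator[OF g t(1)] that by metis
qed

lemma ideal_eq_0_if_keys_standard:
  assumes "q \<in> I" and "\<forall>m\<in>Poly_Mapping.keys q. \<not> (\<exists>g\<in>G. g \<noteq> 0 \<and> ddvd n M (LM n M lt g) m)"
  shows "q = 0"
proof (rule ccontr)
  assume "q \<noteq> 0"
  then obtain g where "g \<in> G" "g \<noteq> 0" "ddvd n M (LM n M lt g) (LM n M lt q)"
    using GB assms(1) unfolding sparse_GB_def by blast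
  moreover have "LM n M lt q \<in> Poly_Mapping.keys q"
    using LM_in_keys[OF monomial_order keys_ideal[OF assms(1)] \<open>q \<noteq> 0\<close>] .
  ultimately show False using assms(2) by blast
qed

lemma exists_standard_representative:
  assumes "Poly_Mapping.keys p \<subseteq> mons n M E"
  shows "\<exists>q. Poly_Mapping.keys q \<subseteq> mons n M E - Nset n M lt G E \<and> p - q \<in> I"
proof -
  have "\<exists>q. Poly_Mapping.keys q \<subseteq> mons n M E - Nset n M lt G E \<and> p - q \<in> poly_module.span I"
  proof (rule exists_standard_remainder[OF monomial_order finite_mons[OF polytope] mons_subset_SMh assms])
    fix m assume "m \<in> mons n M E" "m \<notin> mons n M E - Nset n M lt G E"
    then obtain r where "r \<in> I" "r \<noteq> 0" "Poly_Mapping.keys r \<subseteq> mons n M E" "LM n M lt r = m"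
      using exists_xmon_mult_generator by blast
    then show "\<exists>r\<in>I. r \<noteq> 0 \<and> Poly_Mapping.keys r \<subseteq> mons n M E \<and> LM n M lt r = m" by blast
  qed
  then show ?thesis using poly_module.span_eq_iff ideal_subspace by blast
qed

end

locale sparse_F5_matrices = homogeneous_sparse_GB +
  fixes D :: nat and \<phi> :: "hmon \<Rightarrow> (hmon \<Rightarrow>\<^sub>0 'k::field)" and d :: nat and f :: "hmon \<Rightarrow>\<^sub>0 'k"
  assumes phi: "\<forall>m\<in>Nset n M lt G D. \<phi> m \<in> G \<and> \<phi> m \<noteq> 0 \<and> ddvd n M (LM n M lt (\<phi> m)) m"
    and f: "f \<in> hpart n M d"
begin

abbreviation R :: "(hmon \<Rightarrow>\<^sub>0 'k) set" where
  "R \<equiv> Rset n M lt G D \<phi>"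

abbreviation Bf :: "(hmon \<Rightarrow>\<^sub>0 'k) set" where
  "Bf \<equiv> {xmon s * f | s. s \<in> bset n M lt G D d}"

abbreviation MD :: "(hmon \<Rightarrow>\<^sub>0 'k) set" where
  "MD \<equiv> {xmon u * h | u h e. h \<in> G \<union> {f} \<and> is_homog e h \<and> u \<in> SMh n M \<and> snd u + int e = int D}"

abbreviation R_rows :: "(hmon \<Rightarrow>\<^sub>0 'k) list" where "R_rows \<equiv> enum_set R"
abbreviation B_rows :: "(hmon \<Rightarrow>\<^sub>0 'k) list" where "B_rows \<equiv> enum_set Bf"
abbreviation MD_rows :: "(hmon \<Rightarrow>\<^sub>0 'k) list" where "MD_rows \<equiv> enum_set MD"

lemma keys_f: "Poly_Mapping.keys f \<subseteq> mons n M d"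
  using f keys_subset_mons_if_homog unfolding hpart_def hring_def by blast

lemma Rset_memD:
  assumes "r \<in> R"
  shows "r \<in> I" "r \<noteq> 0" "Poly_Mapping.keys r \<subseteq> mons n M D"
    "r = xmon (LM n M lt r - LM n M lt (\<phi> (LM n M lt r))) * \<phi> (LM n M lt r)"
proof -
  obtain m t where r: "r = xmon t * \<phi> m" "m \<in> Nset n M lt G D" "t \<in> SMh n M"
    "t + LM n M lt (\<phi> m) = m" "sdeg n M t + sdeg n M (LM n M lt (\<phi> m)) = sdeg n M m"
    using assms unfolding Rset_def by blast
  have m: "m \<in> mons n M D" using r(2) unfolding Nset_def by blast
  have g: "\<phi> m \<in> G" "\<phi> m \<noteq> 0" using r(2) phi by blast+
  note gen = xmon_mult_generator[OF g r(3,4) m r(5)]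
  show "r \<in> I" "r \<noteq> 0" "Poly_Mapping.keys r \<subseteq> mons n M D" using gen r(1) by auto
  have "t = m - LM n M lt (\<phi> m)" using r(4) by (simp add: eq_diff_eq)
  then show "r = xmon (LM n M lt r - LM n M lt (\<phi> (LM n M lt r))) * \<phi> (LM n M lt r)"
    using gen(4) r(1) by simp
qed

lemma finite_Rset: "finite R"
proof -
  have "R \<subseteq> (\<lambda>m. xmon (m - LM n M lt (\<phi> m)) * \<phi> m) ` mons n M D"
  proof
    fix r assume "r \<in> R"
    then obtain m t where "r = xmon t * \<phi> m" "m \<in> Nset n M lt G D" "t + LM n M lt (\<phi> m) = m"
      unfolding Rset_def by blast
    moreover from this have "t = m - LM n M lt (\<phi> m)" "m \<in> mons n M D"
      unfolding Nset_def by (auto simp: eq_diff_eq)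
    ultimately show "r \<in> (\<lambda>m. xmon (m - LM n M lt (\<phi> m)) * \<phi> m) ` mons n M D" by blast
  qed
  then show ?thesis using finite_mons[OF polytope] finite_subset by blast
qed

lemma distinct_LM_R_rows: "distinct (map (LM n M lt) (enum_set R))"
proof -
  have "inj_on (LM n M lt) R"
  proof (rule inj_onI)
    fix r r' assume r: "r \<in> R" and r': "r' \<in> R" and eq: "LM n M lt r = LM n M lt r'"
    have "r = xmon (LM n M lt r - LM n M lt (\<phi> (LM n M lt r))) * \<phi> (LM n M lt r)"
      by (rule Rset_memD(4)[OF r])
    also have "\<dots> = xmon (LM n M lt r' - LM n M lt (\<phi> (LM n M lt r'))) * \<phi> (LM n M lt r')"
      by (simp only: eq)
    also have "\<dots> = r'" by (rule Rset_memD(4)[OF r', symmetric])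
    finally show "r = r'" .
  qed
  then show ?thesis using distinct_set_enum_set[OF finite_Rset] by (simp add: distinct_map)
qed

lemma span_R_subset_ideal: "poly_module.span R \<subseteq> I"
  using Rset_memD(1) ideal_subspace by (intro poly_module.span_minimal) auto

lemma bset_eq_standard_monomials:
  "int E + int d = int D \<Longrightarrow> bset n M lt G D d = mons n M E - Nset n M lt G E"
  unfolding bset_def mons_def Nset_def by auto

lemma finite_bset: "finite (bset n M lt G D d)"
proof -
  have "bset n M lt G D d \<subseteq> {m \<in> SMh n M. snd m \<le> int D}" unfolding bset_def by auto
  then show ?thesis using finite_SMh_snd_le[OF polytope] finite_subset by blast
qed

lemma ideal_in_span_Rset:
  assumes p: "p \<in> I" "Poly_Mapping.keys p \<subseteq> mons n M D"
  shows "p \<in> poly_module.span R"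
proof -
  have "\<exists>q. Poly_Mapping.keys q \<subseteq> mons n M D - Nset n M lt G D \<and> p - q \<in> poly_module.span R"
  proof (rule exists_standard_remainder[OF monomial_order finite_mons[OF polytope] mons_subset_SMh p(2)])
    fix m assume "m \<in> mons n M D" "m \<notin> mons n M D - Nset n M lt G D"
    then have m: "m \<in> Nset n M lt G D" "m \<in> mons n M D" by auto
    then have g: "\<phi> m \<in> G" "\<phi> m \<noteq> 0" and "ddvd n M (LM n M lt (\<phi> m)) m" using phi by auto
    then obtain t where t: "t \<in> SMh n M" "t + LM n M lt (\<phi> m) = m"
      "sdeg n M t + sdeg n M (LM n M lt (\<phi> m)) = sdeg n M m"
      unfolding ddvd_def by (auto simp: add.commute)
    then have "xmon t * \<phi> m \<in> R" using m(1) unfolding Rset_def by blast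
    then show "\<exists>r\<in>R. r \<noteq> 0 \<and> Poly_Mapping.keys r \<subseteq> mons n M D \<and> LM n M lt r = m"
      using xmon_mult_generator[OF g t(1,2) m(2) t(3)] by blast
  qed
  then obtain q where q: "Poly_Mapping.keys q \<subseteq> mons n M D - Nset n M lt G D" "p - q \<in> poly_module.span R"
    by blast
  have "p - q \<in> I" using q(2) span_R_subset_ideal by blast
  then have "p - (p - q) \<in> I" using poly_module.subspace_diff[OF ideal_subspace p(1)] by blast
  then have "q \<in> I" by simp
  then have "q = 0" using q(1) by (intro ideal_eq_0_if_keys_standard) (auto simp: Nset_def)
  then show ?thesis using q(2) by simp
qed

lemma xmon_mult_f_in_span:
  assumes u: "u \<in> mons n M E" and deg: "int E + int d = int D"
  shows "xmon u * f \<in> poly_module.span (R \<union> Bf)"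
proof -
  have "Poly_Mapping.keys (xmon u :: hmon \<Rightarrow>\<^sub>0 'k) \<subseteq> mons n M E" using u by (simp add: xmon_def)
  then obtain q where q: "Poly_Mapping.keys q \<subseteq> mons n M E - Nset n M lt G E" "xmon u - q \<in> I"
    using exists_standard_representative by blast
  have "q * f = (\<Sum>s\<in>Poly_Mapping.keys q. smul (Poly_Mapping.lookup q s) (xmon s * f))"
    by (subst poly_as_sum_of_terms) (simp add: sum_distrib_right smul_mult xmon_def)
  also have "\<dots> \<in> poly_module.span Bf"
    using q(1) bset_eq_standard_monomials[OF deg]
    by (intro poly_module.span_sum poly_module.span_scale poly_module.span_base) blast
  finally have "q * f \<in> poly_module.span (R \<union> Bf)" using poly_module.span_mono by blast
  moreover have "(xmon u - q) * f \<in> poly_module.span R"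
  proof (rule ideal_in_span_Rset)
    show "(xmon u - q) * f \<in> I"
      using ideal_mult[OF _ q(2), of f] f unfolding hpart_def by (simp add: mult.commute)
    have "Poly_Mapping.keys (xmon u - q) \<subseteq> mons n M E"
      using keys_diff[of "xmon u" q] q(1) u by (auto simp: xmon_def)
    then show "Poly_Mapping.keys ((xmon u - q) * f) \<subseteq> mons n M D"
      using keys_mult_subset_mons[OF _ keys_f] deg by (metis of_nat_add of_nat_eq_iff)
  qed
  then have "(xmon u - q) * f \<in> poly_module.span (R \<union> Bf)" using poly_module.span_mono by blast
  ultimately have "q * f + (xmon u - q) * f \<in> poly_module.span (R \<union> Bf)" by (rule poly_module.span_add)
  then show ?thesis by (simp add: algebra_simps)
qed

lemma keys_MD: "x \<in> MD \<Longrightarrow> Poly_Mapping.keys x \<subseteq> mons n M D"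
proof -
  assume "x \<in> MD"
  then obtain u h e where x: "x = xmon u * h" "h \<in> G \<union> {f}" "is_homog e h" "u \<in> SMh n M"
    "snd u + int e = int D" by blast
  have "Poly_Mapping.keys h \<subseteq> SMh n M"
    using x(2) keys_ideal[OF generator_in_ideal] f unfolding hpart_def hring_def by blast
  then have "Poly_Mapping.keys h \<subseteq> mons n M e" using x(3) by (rule keys_subset_mons_if_homog)
  moreover have "Poly_Mapping.keys (xmon u :: hmon \<Rightarrow>\<^sub>0 'k) \<subseteq> mons n M (nat (snd u))"
    using x(4) SMh_snd_nonneg[OF x(4)] by (simp add: xmon_def mons_def)
  moreover have "nat (snd u) + e = D" using x(5) SMh_snd_nonneg[OF x(4)] by linarith
  ultimately show ?thesis using keys_mult_subset_mons x(1) by metis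
qed

lemma Mstar_rows_subset_MD: "R \<union> Bf \<subseteq> MD"
proof -
  have "R \<subseteq> MD"
  proof
    fix r assume r: "r \<in> R"
    then obtain m t where r: "r = xmon t * \<phi> m" "m \<in> Nset n M lt G D" "t \<in> SMh n M"
      "t + LM n M lt (\<phi> m) = m"
      unfolding Rset_def by blast
    have g: "\<phi> m \<in> G" "\<phi> m \<noteq> 0" using phi r(2) by auto
    define e where "e = nat (snd (LM n M lt (\<phi> m)))"
    have "LM n M lt (\<phi> m) \<in> SMh n M"
      using LM_in_keys[OF monomial_order keys_ideal[OF generator_in_ideal] g(2)] g(1)
        keys_ideal[OF generator_in_ideal[OF g(1)]] by blast
    then have e: "int e = snd (LM n M lt (\<phi> m))" unfolding e_def using SMh_snd_nonneg by simp
    then have "is_homog e (\<phi> m)" unfolding is_homog_def using keys_generator_snd[OF g] by simp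
    moreover have "snd t + int e = int D"
      using r(2,4) e unfolding Nset_def mons_def by (metis (mono_tags, lifting) mem_Collect_eq snd_add)
    ultimately show "r \<in> MD" using r(1,3) g(1) by blast
  qed
  moreover have "Bf \<subseteq> MD"
  proof
    fix x assume "x \<in> Bf"
    then obtain s where "x = xmon s * f" "s \<in> SMh n M" "snd s + int d = int D"
      unfolding bset_def by blast
    moreover have "is_homog d f" using f unfolding hpart_def by blast
    ultimately show "x \<in> MD" by blast
  qed
  ultimately show ?thesis by blast
qed

lemma span_Mstar_rows_eq_span_MD_rows: "poly_module.span (R \<union> Bf) = poly_module.span MD"
  unfolding poly_module.span_eq
proof
  show "R \<union> Bf \<subseteq> poly_module.span MD"
    using Mstar_rows_subset_MD poly_module.span_superset by blast
  show "MD \<subseteq> poly_module.span (R \<union> Bf)"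
  proof
    fix x assume "x \<in> MD"
    then obtain u h e where x: "x = xmon u * h" "h \<in> G \<union> {f}" "is_homog e h" "u \<in> SMh n M"
      "snd u + int e = int D" by blast
    show "x \<in> poly_module.span (R \<union> Bf)"
    proof (cases "h \<in> G")
      case True
      then have "x \<in> poly_module.span R"
        using ideal_in_span_Rset xmon_mult_ideal[OF x(4) generator_in_ideal] keys_MD[OF \<open>x \<in> MD\<close>] x(1)
        by simp
      then show ?thesis using poly_module.span_mono by blast
    next
      case False
      then have "h = f" using x(2) by blast
      show ?thesis
      proof (cases "f = 0")
        case False
        then obtain b where b: "b \<in> Poly_Mapping.keys f" using keys_eq_empty[of f] by blast
        then have "snd b = int e" using x(3) \<open>h = f\<close> unfolding is_homog_def by blast
        moreover have "snd b = int d" using f b unfolding hpart_def is_homog_def by blast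
        ultimately have "e = d" by simp
        moreover have "u \<in> mons n M (nat (snd u))" using x(4) SMh_snd_nonneg[OF x(4)] by (simp add: mons_def)
        ultimately show ?thesis
          using xmon_mult_f_in_span x(1,5) \<open>h = f\<close> SMh_snd_nonneg[OF x(4)] by simp
      qed (simp add: x(1) \<open>h = f\<close> poly_module.span_zero)
    qed
  qed
qed


lemma finite_MD: "finite MD"
proof -
  have "MD \<subseteq> (\<lambda>(u, h). xmon u * h) ` ({m \<in> SMh n M. snd m \<le> int D} \<times> (G \<union> {f}))"
  proof
    fix x assume "x \<in> MD"
    then obtain u h e where "x = xmon u * h" "h \<in> G \<union> {f}" "u \<in> SMh n M" "snd u + int e = int D"
      by blast
    then show "x \<in> (\<lambda>(u, h). xmon u * h) ` ({m \<in> SMh n M. snd m \<le> int D} \<times> (G \<union> {f}))" by force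
  qed
  then show ?thesis using finite_SMh_snd_le[OF polytope] finite_G finite_subset by blast
qed

lemma finite_Bf: "finite Bf"
proof -
  have "Bf = (\<lambda>s. xmon s * f) ` bset n M lt G D d" by blast
  then show ?thesis using finite_bset by simp
qed

lemmas set_rows =
  conjunct2[OF distinct_set_enum_set[OF finite_Rset]]
  conjunct2[OF distinct_set_enum_set[OF finite_Bf]]
  conjunct2[OF distinct_set_enum_set[OF finite_MD]]

lemma keys_Mstar_rows: "\<forall>p\<in>set (R_rows @ B_rows). Poly_Mapping.keys p \<subseteq> mons n M D"
  using keys_MD Mstar_rows_subset_MD unfolding set_append set_rows by blast

lemma keys_MD_rows: "\<forall>p\<in>set MD_rows. Poly_Mapping.keys p \<subseteq> mons n M D"
  using keys_MD unfolding set_rows by blast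

lemma span_Mstar_rows_eq: "poly_module.span (set (R_rows @ B_rows)) = poly_module.span (set MD_rows)"
  using span_Mstar_rows_eq_span_MD_rows unfolding set_append set_rows .

text \<open>Combinations of the rows \<open>X\<^sup>s f\<close>, \<open>X\<^sup>s \<in> b\<close>, are products \<open>q f\<close> with \<open>q\<close> supported
  on standard monomials; if \<open>q f \<in> I\<^sup>h\<close> and \<open>f\<close> is a nonzerodivisor, then \<open>q \<in> I\<^sup>h\<close>, so \<open>q = 0\<close>.\<close>

lemma lin_comb_B_rows_eq_0:
  assumes nzd: "nonzerodivisor_mod n M I f" and comb: "lin_comb c B_rows \<in> I"
  shows "\<forall>j<length B_rows. c j = 0"
proof -
  let ?B = "bset n M lt G D d"
  have "B_rows \<in> lists ((\<lambda>s. xmon s * f) ` ?B)" using set_rows(2) by auto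
  then obtain sl where sl: "B_rows = map (\<lambda>s. xmon s * f) sl" "set sl \<subseteq> ?B"
    unfolding lists_image by auto
  have "distinct sl"
    using distinct_set_enum_set[OF finite_Bf] sl(1) by (simp add: distinct_map)
  define q where "q = (\<Sum>j<length sl. smul (c j) (xmon (sl ! j)))"
  have "lin_comb c B_rows = q * f"
    unfolding lin_comb_def q_def sl(1) by (simp add: sum_distrib_right smul_mult)
  have lookup_q: "Poly_Mapping.lookup q (sl ! j) = c j" if "j < length sl" for j
  proof -
    have "Poly_Mapping.lookup q (sl ! j) = (\<Sum>j'<length sl. if j' = j then c j else 0)"
      unfolding q_def lookup_sum lookup_smul using nth_eq_iff_index_eq[OF \<open>distinct sl\<close> _ that]
      by (intro sum.cong) (auto simp: xmon_def lookup_single)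
    then show ?thesis using that by simp
  qed
  have "Poly_Mapping.keys q \<subseteq> ?B"
  proof
    fix m assume "m \<in> Poly_Mapping.keys q"
    then obtain j where j: "j < length sl" "m \<in> Poly_Mapping.keys (smul (c j) (xmon (sl ! j)))"
      using keys_sum[of "\<lambda>j. smul (c j) (xmon (sl ! j))" "{..<length sl}"] unfolding q_def by blast
    moreover have "Poly_Mapping.keys (smul (c j) (xmon (sl ! j))) \<subseteq> {sl ! j}"
      using keys_smul_subset[of "c j" "xmon (sl ! j)"] by (simp add: xmon_def)
    ultimately have "m = sl ! j" by blast
    then show "m \<in> ?B" using sl(2) j(1) by auto
  qed
  then have "q \<in> hring n M" unfolding hring_def bset_def by blast
  moreover have "f * q \<in> I" using comb \<open>lin_comb c B_rows = q * f\<close> by (simp add: mult.commute)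
  ultimately have "q \<in> I" using nzd unfolding nonzerodivisor_mod_def by blast
  then have "q = 0"
    using \<open>Poly_Mapping.keys q \<subseteq> ?B\<close> by (intro ideal_eq_0_if_keys_standard) (auto simp: bset_def)
  then show ?thesis using lookup_q sl(1) by simp
qed

lemma lin_comb_Mstar_rows_eq_0:
  assumes nzd: "nonzerodivisor_mod n M I f" and comb: "lin_comb c (R_rows @ B_rows) = 0"
  shows "\<forall>i<length (R_rows @ B_rows). c i = 0"
proof -
  let ?a = "length R_rows"
  have "lin_comb c R_rows \<in> poly_module.span (set R_rows)"
    unfolding span_set_eq_lin_combs by (rule rangeI)
  then have R: "lin_comb c R_rows \<in> I" using span_R_subset_ideal unfolding set_rows by blast
  have sum: "lin_comb c R_rows + lin_comb (\<lambda>j. c (?a + j)) B_rows = 0"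
    using comb by (simp add: lin_comb_append)
  then have "- lin_comb c R_rows = lin_comb (\<lambda>j. c (?a + j)) B_rows" by (simp only: neg_eq_iff_add_eq_0)
  then have "lin_comb (\<lambda>j. c (?a + j)) B_rows \<in> I" using poly_module.subspace_neg[OF ideal_subspace R] by simp
  then have B: "\<forall>j<length B_rows. c (?a + j) = 0" using lin_comb_B_rows_eq_0[OF nzd] by blast
  then have "lin_comb (\<lambda>j. c (?a + j)) B_rows = 0" unfolding lin_comb_def by (intro sum.neutral) simp
  then have "lin_comb c R_rows = 0" using sum by simp
  moreover have "x \<noteq> 0 \<and> Poly_Mapping.keys x \<subseteq> SMh n M" if "x \<in> set R_rows" for x
    using Rset_memD(2,3) that mons_subset_SMh unfolding set_rows by blast
  ultimately have R: "\<forall>i<?a. c i = 0"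
    by (intro lin_comb_eq_0_if_distinct_LM[OF monomial_order _ distinct_LM_R_rows])
  show ?thesis
  proof (intro allI impI)
    fix i assume i: "i < length (R_rows @ B_rows)"
    show "c i = 0"
    proof (cases "i < ?a")
      case False
      then have "i = ?a + (i - ?a)" "i - ?a < length B_rows" using i by auto
      then show ?thesis using B[rule_format, of "i - ?a"] by simp
    qed (use R in blast)
  qed
qed
end


theorem mainTheorem10:
  fixes n :: nat and M :: "(nat \<Rightarrow> real) set" and lt :: "zvec \<Rightarrow> zvec \<Rightarrow> bool"
    and I G :: "(hmon \<Rightarrow>\<^sub>0 'k::field_char_0) set" and f :: "hmon \<Rightarrow>\<^sub>0 'k"
    and D d :: nat and \<phi> :: "hmon \<Rightarrow> (hmon \<Rightarrow>\<^sub>0 'k)"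
  assumes "polytope n M" and "(\<lambda>_. 0) \<in> M"
    and "pointed (SM n M)" and "pointed (SMh n M)"
    and "monomial_order n M lt"
    and "homog_ideal n M I"
    and "sparse_GB n M lt I G" and "finite G" and "\<forall>g\<in>G. homogeneous g"
    and "\<forall>m\<in>Nset n M lt G D. \<phi> m \<in> G \<and> \<phi> m \<noteq> 0 \<and> ddvd n M (LM n M lt (\<phi> m)) m"
    and "f \<in> hpart n M d"
  shows "Rows (col_list n M lt D) (rref (Mstar_mat n M lt G D \<phi> d f))
           = Rows (col_list n M lt D) (rref (MD_mat n M lt G D f))
         \<and> (nonzerodivisor_mod n M I f \<longrightarrow> full_rank (Mstar_mat n M lt G D \<phi> d f))"
proof -
  have ideal: "is_ideal n M I" using assms(6) unfolding homog_ideal_def by blast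
  interpret sparse_F5_matrices n M lt I G D \<phi> d f
    by unfold_locales (fact assms ideal)+
  let ?cs = "col_list n M lt D"
  note cs = set_col_list[OF monomial_order polytope] distinct_col_list[OF monomial_order polytope]
  have keys: "\<forall>p\<in>set (R_rows @ B_rows). Poly_Mapping.keys p \<subseteq> set ?cs"
    "\<forall>p\<in>set MD_rows. Poly_Mapping.keys p \<subseteq> set ?cs"
    using keys_Mstar_rows keys_MD_rows unfolding cs(1) by blast+
  have "Rows ?cs (rref (macaulay ?cs (R_rows @ B_rows))) = Rows ?cs (rref (macaulay ?cs MD_rows))"
    by (rule Rows_rref_macaulay_eq[OF cs(2) keys span_Mstar_rows_eq])
  moreover have "nonzerodivisor_mod n M I f \<longrightarrow> full_rank (macaulay ?cs (R_rows @ B_rows))"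
    using full_rank_macaulay[OF cs(2) keys(1)] lin_comb_Mstar_rows_eq_0 by blast
  ultimately show ?thesis unfolding Mstar_mat_def MD_mat_def by blast
qed

end
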